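(* Let $(R,\mathfrak{m})$ be a finite commutative local ring which is uniserial, and let $k$ be the length of $R$ as a module over itself. Let $K$ be a field of characteristic zero. Then $\mathrm{St}^K_2(R)$ is a direct sum of exactly $k$ irreducible $\mathrm{GL}_2(R)$-representations, which are pairwise non-isomorphic and none of which is trivial. In particular, for a Dedekind domain $\mathcal{O}$ and a nonzero prime ideal $\mathfrak{p}$, $\mathrm{St}^K_2(\mathcal{O}/\mathfrak{p}^k)$ has length exactly $k$ as a $\mathrm{GL}_2(\mathcal{O}/\mathfrak{p}^k)$-representation.
   Context: A ring is uniserial if its ideals are linearly ordered by inclusion. For $n=2$, the Tits complex $\mathcal{T}_2(R)$ is the discrete set of rank one direct summands $L$ of $R^2$ with $L$ and $R^2/L$ free (i.e. lines spanned by unimodular vectors), with its natural $\mathrm{GL}_2(R)$-action, and $\mathrm{St}^K_2(R)=\tilde H_{0}(\mathcal{T}_2(R);K)$, the kernel of the augmentation $K[\mathcal{T}_2(R)]\to K$, viewed as a $\mathrm{GL}_2(R)$-representation. *)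

theory Defs
  imports "HOL-Analysis.Analysis"
begin

definition is_ideal :: "'r::comm_ring_1 set \<Rightarrow> bool" where
  "is_ideal I \<longleftrightarrow> 0 \<in> I \<and> (\<forall>x\<in>I. \<forall>y\<in>I. x + y \<in> I) \<and> (\<forall>r. \<forall>x\<in>I. r * x \<in> I)"

definition is_maximal_ideal :: "'r::comm_ring_1 set \<Rightarrow> bool" where
  "is_maximal_ideal M \<longleftrightarrow> is_ideal M \<and> M \<noteq> UNIV \<and>
     (\<forall>J. is_ideal J \<and> M \<subseteq> J \<longrightarrow> J = M \<or> J = UNIV)"

definition local_ring :: "'r::comm_ring_1 itself \<Rightarrow> bool" where
  "local_ring _ \<longleftrightarrow> (\<exists>!M::'r set. is_maximal_ideal M)"

definition uniserial :: "'r::comm_ring_1 itself \<Rightarrow> bool" where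
  "uniserial _ \<longleftrightarrow> (\<forall>I J::'r set. is_ideal I \<and> is_ideal J \<longrightarrow> I \<subseteq> J \<or> J \<subseteq> I)"

definition ring_length :: "'r::comm_ring_1 itself \<Rightarrow> nat" where
  "ring_length _ = (GREATEST n. \<exists>c :: nat \<Rightarrow> 'r set.
      (\<forall>i\<le>n. is_ideal (c i)) \<and> (\<forall>i<n. c i \<subset> c (Suc i)))"

definition GL2 :: "('r::comm_ring_1 ^2^2) set" where
  "GL2 = {g. invertible g}"

definition unimodular :: "'r::comm_ring_1 ^2 \<Rightarrow> bool" where
  "unimodular v \<longleftrightarrow> (\<exists>a b. a * v $ 1 + b * v $ 2 = 1)"

text \<open>Lines spanned by unimodular vectors (vertices of T_2(R)).\<close>
definition tits2 :: "('r::comm_ring_1 ^2) set set" where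
  "tits2 = {L. \<exists>v. unimodular v \<and> L = {(\<lambda>r. r *s v) r | r. True} }"

text \<open>The Steinberg module St_2^K(R): kernel of the augmentation K[T_2(R)] \<rightarrow> K.
  Elements of K[T_2(R)] are K-valued functions on the (finite) set of lines,
  extended by 0 outside.\<close>
definition steinberg2 :: "(('r::{comm_ring_1,finite} ^2) set \<Rightarrow> 'k::field) set" where
  "steinberg2 = {f. (\<forall>L. L \<notin> tits2 \<longrightarrow> f L = 0) \<and> (\<Sum>L\<in>tits2. f L) = 0}"

text \<open>Permutation action: (g.f)(L) = f(g^{-1} L); for invertible g, g^{-1} L is the
  preimage of L under g.\<close>
definition st_act :: "'r::comm_ring_1 ^2^2 \<Rightarrow> (('r ^2) set \<Rightarrow> 'k::field) \<Rightarrow> (('r ^2) set \<Rightarrow> 'k)" where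
  "st_act g f = (\<lambda>L. f {v. g *v v \<in> L})"

definition fsubspace :: "('a \<Rightarrow> 'k::field) set \<Rightarrow> bool" where
  "fsubspace W \<longleftrightarrow> (\<lambda>_. 0) \<in> W \<and> (\<forall>x\<in>W. \<forall>y\<in>W. (\<lambda>a. x a + y a) \<in> W)
     \<and> (\<forall>c. \<forall>x\<in>W. (\<lambda>a. c * x a) \<in> W)"

definition flinear_on :: "('a \<Rightarrow> 'k::field) set \<Rightarrow> (('a \<Rightarrow> 'k) \<Rightarrow> 'b) \<Rightarrow> ('b \<Rightarrow> 'b \<Rightarrow> 'b) \<Rightarrow> ('k \<Rightarrow> 'b \<Rightarrow> 'b) \<Rightarrow> bool" where
  "flinear_on W \<phi> pl sc \<longleftrightarrow> (\<forall>x\<in>W. \<forall>y\<in>W. \<phi> (\<lambda>a. x a + y a) = pl (\<phi> x) (\<phi> y))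
     \<and> (\<forall>c. \<forall>x\<in>W. \<phi> (\<lambda>a. c * x a) = sc c (\<phi> x))"

definition invariant :: "'g set \<Rightarrow> ('g \<Rightarrow> ('a \<Rightarrow> 'k) \<Rightarrow> ('a \<Rightarrow> 'k)) \<Rightarrow> ('a \<Rightarrow> 'k::field) set \<Rightarrow> bool" where
  "invariant G act W \<longleftrightarrow> (\<forall>g\<in>G. \<forall>w\<in>W. act g w \<in> W)"

definition irreducible_rep :: "'g set \<Rightarrow> ('g \<Rightarrow> ('a \<Rightarrow> 'k) \<Rightarrow> ('a \<Rightarrow> 'k)) \<Rightarrow> ('a \<Rightarrow> 'k::field) set \<Rightarrow> bool" where
  "irreducible_rep G act W \<longleftrightarrow> fsubspace W \<and> invariant G act W \<and> W \<noteq> {\<lambda>_. 0} \<and>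
     (\<forall>U. fsubspace U \<and> invariant G act U \<and> U \<subseteq> W \<longrightarrow> U = {\<lambda>_. 0} \<or> U = W)"

definition iso_rep :: "'g set \<Rightarrow> ('g \<Rightarrow> ('a \<Rightarrow> 'k) \<Rightarrow> ('a \<Rightarrow> 'k)) \<Rightarrow> ('a \<Rightarrow> 'k::field) set \<Rightarrow> ('a \<Rightarrow> 'k) set \<Rightarrow> bool" where
  "iso_rep G act W1 W2 \<longleftrightarrow> (\<exists>\<phi>. bij_betw \<phi> W1 W2
      \<and> flinear_on W1 \<phi> (\<lambda>x y a. x a + y a) (\<lambda>c x a. c * x a)
      \<and> (\<forall>g\<in>G. \<forall>w\<in>W1. \<phi> (act g w) = act g (\<phi> w)))"

definition iso_trivial :: "'g set \<Rightarrow> ('g \<Rightarrow> ('a \<Rightarrow> 'k) \<Rightarrow> ('a \<Rightarrow> 'k)) \<Rightarrow> ('a \<Rightarrow> 'k::field) set \<Rightarrow> bool" where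
  "iso_trivial G act W \<longleftrightarrow> (\<exists>\<phi> :: ('a \<Rightarrow> 'k) \<Rightarrow> 'k. bij_betw \<phi> W UNIV
      \<and> flinear_on W \<phi> (+) (*)
      \<and> (\<forall>g\<in>G. \<forall>w\<in>W. \<phi> (act g w) = \<phi> w))"

definition direct_sum :: "('a \<Rightarrow> 'k::field) set \<Rightarrow> nat \<Rightarrow> (nat \<Rightarrow> ('a \<Rightarrow> 'k) set) \<Rightarrow> bool" where
  "direct_sum V n W \<longleftrightarrow> (\<forall>i<n. W i \<subseteq> V) \<and>
     (\<forall>f\<in>V. \<exists>!ws. (\<forall>i. (i < n \<longrightarrow> ws i \<in> W i) \<and> (n \<le> i \<longrightarrow> ws i = (\<lambda>_. 0)))
                    \<and> f = (\<lambda>a. \<Sum>i<n. ws i a))"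

end

theory Submission
  imports Defs
begin

text \<open>
  The ideals of \<open>R\<close> form a single chain \<open>0 = I\<^sub>0 \<subset> \<dots> \<subset> I\<^sub>k = R\<close>. Lines spanned by unimodular
  vectors \<open>v\<close>, \<open>w\<close> are congruent modulo an ideal \<open>I\<close> when \<open>det(v, w) \<in> I\<close>; this is a
  \<open>GL\<^sub>2(R)\<close>-invariant equivalence relation, and averaging over congruence classes splits the
  Steinberg module into the layers \<open>W\<^sub>i\<close> of functions that are constant on \<open>I\<^sub>i\<close>-classes and
  sum to zero over every \<open>I\<^sub>i\<^sub>+\<^sub>1\<close>-class.

  The stabiliser \<open>B\<close> of the standard line has exactly two orbits on the \<open>I\<^sub>i\<^sub>+\<^sub>1\<close>-class of
  that line and acts transitively enough elsewhere that the \<open>B\<close>-fixed vectors of \<open>W\<^sub>i\<close> form a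
  line, spanned by some \<open>\<psi>\<^sub>i\<close>. Averaging a suitable translate over \<open>B\<close> shows that every
  nonzero subrepresentation of \<open>W\<^sub>i\<close> contains \<open>\<psi>\<^sub>i\<close>; the equivariant self-adjoint operator
  \<open>h \<mapsto> \<Sum>\<^sub>g \<langle>h, g\<psi>\<^sub>i\<rangle> g\<psi>\<^sub>i\<close> is then a nonzero scalar on \<open>W\<^sub>i\<close>, which forces irreducibility.

  A lower transvection with entry \<open>t \<in> I\<^sub>i\<^sub>+\<^sub>1 - I\<^sub>i\<close> moves \<open>\<psi>\<^sub>i\<close> but acts trivially on
  every \<open>W\<^sub>j\<close> with \<open>j > i\<close>, so the layers are non-trivial and pairwise non-isomorphic.\<close>

definition vec2 :: "'r \<Rightarrow> 'r \<Rightarrow> 'r^2" where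
  "vec2 a b = (\<chi> i. if i = 1 then a else b)"

definition mat2 :: "'r \<Rightarrow> 'r \<Rightarrow> 'r \<Rightarrow> 'r \<Rightarrow> 'r^2^2" where
  "mat2 a b c d = (\<chi> i. if i = 1 then vec2 a b else vec2 c d)"

definition det2 :: "'r::comm_ring_1 ^2 \<Rightarrow> 'r^2 \<Rightarrow> 'r" where
  "det2 v w = v$1 * w$2 - v$2 * w$1"

definition line_of :: "'r::comm_ring_1 ^2 \<Rightarrow> ('r^2) set" where
  "line_of v = {r *s v | r. True}"

definition pullback :: "'r::comm_ring_1^2^2 \<Rightarrow> ('r^2) set \<Rightarrow> ('r^2) set" where
  "pullback g L = {v. g *v v \<in> L}"

lemma tits2_eq: "tits2 = {L. \<exists>v. unimodular v \<and> L = line_of v}"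
  unfolding tits2_def line_of_def by simp

lemma st_act_eq_pullback: "st_act g f L = f (pullback g L)"
  unfolding st_act_def pullback_def by simp

lemma vec2_nth [simp]: "vec2 a b $ 1 = a" "vec2 a b $ 2 = b"
  by (simp_all add: vec2_def)

lemma vec2_coords: "v = vec2 (v$1) (v$2)"
  by (simp add: vec_eq_iff forall_2)

lemma mat2_nth [simp]: "mat2 a b c d $ 1 = vec2 a b" "mat2 a b c d $ 2 = vec2 c d"
  by (simp_all add: mat2_def)

lemma mat2_mult_vec2 [simp]: "mat2 a b c d *v vec2 p q = vec2 (a*p + b*q) (c*p + d*q)"
  by (simp add: vec_eq_iff forall_2 matrix_vector_mult_def sum_2)

lemma mat2_mult_vec: "mat2 a b c d *v v = vec2 (a * v$1 + b * v$2) (c * v$1 + d * v$2)"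
  by (metis mat2_mult_vec2 vec2_coords)

lemma mat2_mult_mat2 [simp]: "mat2 a b c d ** mat2 a' b' c' d' =
   mat2 (a*a' + b*c') (a*b' + b*d') (c*a' + d*c') (c*b' + d*d')"
  by (simp add: vec_eq_iff forall_2 matrix_matrix_mult_def sum_2)

lemma mat2_one: "(mat 1 :: 'r::comm_ring_1^2^2) = mat2 1 0 0 1"
  by (simp add: vec_eq_iff forall_2 mat_def)

lemma smult_vec2 [simp]: "c *s vec2 a b = vec2 (c*a) (c*b)"
  by (simp add: vec_eq_iff forall_2)

lemma unimodular_vec2: "unimodular (vec2 a b) \<longleftrightarrow> (\<exists>x y. x*a + y*b = 1)"
  by (simp add: unimodular_def)

lemma unimodular_vec2_1: "unimodular (vec2 1 t)"
  unfolding unimodular_vec2 by (rule exI[of _ 1], rule exI[of _ 0]) simp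

lemma matrix_vector_mult_smult: "(A::'r::comm_ring_1^2^2) *v (c *s v) = c *s (A *v v)"
  by (simp add: vec_eq_iff matrix_vector_mult_def sum_distrib_left mult_ac)

lemma det2_smult [simp]: "det2 (c *s v) w = c * det2 v w" "det2 v (c *s w) = c * det2 v w"
  by (simp_all add: det2_def algebra_simps)

lemma det2_swap: "det2 w v = - det2 v w"
  by (simp add: det2_def algebra_simps)

lemma det2_matrix_vector_mult:
  "det2 ((A::'r::comm_ring_1^2^2) *v v) (A *v w) = (A$1$1 * A$2$2 - A$1$2 * A$2$1) * det2 v w"
  by (simp add: det2_def matrix_vector_mult_def sum_2 algebra_simps)

lemma det2_pluecker: "det2 v w * (x::'r::comm_ring_1^2)$i = det2 v x * w$i + det2 x w * v$i"
proof -
  have "det2 v w * x$1 = det2 v x * w$1 + det2 x w * v$1"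
       "det2 v w * x$2 = det2 v x * w$2 + det2 x w * v$2"
    by (simp_all add: det2_def algebra_simps)
  then show ?thesis using exhaust_2[of i] by blast
qed

lemma unimodular_of_matrix_vector_mult:
  assumes "unimodular ((H::'r::comm_ring_1^2^2) *v w)" shows "unimodular w"
proof -
  obtain a b where "a * (H *v w)$1 + b * (H *v w)$2 = 1"
    using assms unfolding unimodular_def by blast
  then show ?thesis unfolding unimodular_def
    by (intro exI[of _ "a * H$1$1 + b * H$2$1"] exI[of _ "a * H$1$2 + b * H$2$2"])
       (simp add: matrix_vector_mult_def sum_2 algebra_simps)
qed

lemma in_line_of_self: "v \<in> line_of v"
  unfolding line_of_def by (auto intro!: exI[of _ 1])

lemma line_of_smult_subset: "line_of (c *s v) \<subseteq> line_of v"
  unfolding line_of_def by (auto simp: vector_smult_assoc)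

lemma line_of_subset: assumes "w \<in> line_of v" shows "line_of w \<subseteq> line_of v"
proof -
  obtain s where "w = s *s v" using assms unfolding line_of_def by blast
  then show ?thesis using line_of_smult_subset by blast
qed

lemma line_of_unit_smult: assumes "u dvd 1" shows "line_of (u *s v) = line_of v"
proof
  obtain i where "1 = u * i" using assms by (rule dvdE)
  then have "v = i *s (u *s v)" by (simp add: vector_smult_assoc mult.commute)
  then show "line_of v \<subseteq> line_of (u *s v)" by (metis line_of_smult_subset)
qed (rule line_of_smult_subset)

lemma det2_eq_0_imp_in_line_of:
  assumes "unimodular x" and "det2 x y = 0" shows "y \<in> line_of x"
proof -
  obtain a b where ab: "a * x$1 + b * x$2 = 1" using assms(1) unfolding unimodular_def by blast
  have "(a * y$1 + b * y$2) * x$1 = y$1 * (a * x$1 + b * x$2) + b * det2 x y"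
       "(a * y$1 + b * y$2) * x$2 = y$2 * (a * x$1 + b * x$2) - a * det2 x y"
    by (simp_all add: det2_def algebra_simps)
  then have "y$1 = (a * y$1 + b * y$2) * x$1" "y$2 = (a * y$1 + b * y$2) * x$2"
    using ab assms(2) by simp_all
  then have "y = (a * y$1 + b * y$2) *s x"
    unfolding vec_eq_iff forall_2 vector_smult_component by blast
  then show ?thesis unfolding line_of_def by blast
qed

lemma line_of_eq_imp_unit_smult:
  assumes v: "unimodular v" and eq: "line_of v = line_of w"
  shows "\<exists>u. u dvd 1 \<and> w = u *s v"
proof -
  obtain l where l: "w = l *s v" using eq in_line_of_self[of w] unfolding line_of_def by blast
  obtain m where m: "v = m *s w" using eq in_line_of_self[of v] unfolding line_of_def by blast
  obtain a b where ab: "a * v$1 + b * v$2 = 1" using v unfolding unimodular_def by blast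
  have "v = m *s (l *s v)" by (subst l[symmetric]) (rule m)
  then have "v = (m * l) *s v" by (simp add: vector_smult_assoc)
  then have ml: "(m * l) * v$1 = v$1" "(m * l) * v$2 = v$2" by (metis vector_smult_component)+
  have "m * l = (m * l) * (a * v$1 + b * v$2)" using ab by simp
  also have "\<dots> = a * ((m * l) * v$1) + b * ((m * l) * v$2)" by (simp add: algebra_simps)
  also have "\<dots> = a * v$1 + b * v$2" by (simp only: ml)
  finally have "l * m = 1" using ab by (simp add: mult.commute)
  then show ?thesis using l by (metis dvdI)
qed

lemma is_ideal_mult: "is_ideal I \<Longrightarrow> x \<in> I \<Longrightarrow> r * x \<in> I"
  and is_ideal_add: "is_ideal I \<Longrightarrow> x \<in> I \<Longrightarrow> y \<in> I \<Longrightarrow> x + y \<in> I"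
  and is_ideal_zero: "is_ideal I \<Longrightarrow> 0 \<in> I"
  unfolding is_ideal_def by blast+

lemma is_ideal_mult_right: "is_ideal I \<Longrightarrow> x \<in> I \<Longrightarrow> x * r \<in> I"
  by (metis is_ideal_mult mult.commute)

lemma is_ideal_uminus: "is_ideal I \<Longrightarrow> x \<in> I \<Longrightarrow> - x \<in> I"
  using is_ideal_mult[of I x "-1"] by simp

lemma is_ideal_uminus_iff: "is_ideal I \<Longrightarrow> - x \<in> I \<longleftrightarrow> x \<in> I"
  using is_ideal_uminus[of I x] is_ideal_uminus[of I "- x"] by auto

lemma is_ideal_UNIV: "is_ideal UNIV"
  and is_ideal_0: "is_ideal {0::'r::comm_ring_1}"
  and is_ideal_multiples: "is_ideal {x. b dvd x}"
  unfolding is_ideal_def by auto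

lemma is_ideal_dvd: "is_ideal I \<Longrightarrow> b \<in> I \<Longrightarrow> b dvd x \<Longrightarrow> x \<in> I"
  by (metis dvdE is_ideal_mult_right)

lemma uniserial_dvd_of_not_in_ideal:
  assumes "uniserial TYPE('r::comm_ring_1)" and "is_ideal (J::'r set)" and "x \<notin> J" and "y \<in> J"
  shows "x dvd y"
proof -
  have "{z. x dvd z} \<subseteq> J \<or> J \<subseteq> {z. x dvd z}"
    using assms(1,2) is_ideal_multiples unfolding uniserial_def by blast
  then show ?thesis using assms(3,4) dvd_refl[of x] by blast
qed

lemma uniserial_dvd_total:
  assumes "uniserial TYPE('r::comm_ring_1)" shows "(a::'r) dvd b \<or> b dvd a"
  using uniserial_dvd_of_not_in_ideal[OF assms is_ideal_multiples, of a b b] by auto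

lemma uniserial_not_unit_add:
  fixes a b :: "'r::comm_ring_1"
  assumes "uniserial TYPE('r)" and "\<not> a dvd 1" and "\<not> b dvd 1"
  shows "\<not> (a + b) dvd 1"
  using uniserial_dvd_total[OF assms(1), of a b] assms(2,3)
  by (metis add.commute dvd_add_triv_left_iff dvd_trans)

lemma unit_mult_iff: "(a * b) dvd (1::'a::comm_monoid_mult) \<longleftrightarrow> a dvd 1 \<and> b dvd 1"
  by (metis dvd_mult_left dvd_mult_right mult_1_right mult_dvd_mono)

lemma uniserial_unimodular_unit:
  fixes v :: "'r::comm_ring_1^2"
  assumes "uniserial TYPE('r)" and "unimodular v"
  shows "v$1 dvd 1 \<or> v$2 dvd 1"
proof (rule ccontr)
  obtain a b where ab: "a * v$1 + b * v$2 = 1" using assms(2) unfolding unimodular_def by blast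
  assume "\<not> (v$1 dvd 1 \<or> v$2 dvd 1)"
  then have "\<not> (a * v$1 + b * v$2) dvd 1"
    by (intro uniserial_not_unit_add[OF assms(1)]) (simp_all add: unit_mult_iff)
  then show False using ab by simp
qed

lemma uniserial_associated:
  fixes a b :: "'r::comm_ring_1"
  assumes "uniserial TYPE('r)" and "a dvd b" and "b dvd a"
  shows "\<exists>u. u dvd 1 \<and> b = u * a"
proof (cases "a = 0")
  case True then show ?thesis using assms(2) by (intro exI[of _ 1]) simp
next
  case False
  obtain r s where r: "b = a * r" and s: "a = b * s" using assms(2,3) by (auto elim!: dvdE)
  have "a = a * r * s" using s by (simp only: r)
  then have e: "(1 - r * s) * a = 0" by (simp add: algebra_simps)
  have "\<not> (1 - r * s) dvd 1"
  proof
    assume "(1 - r * s) dvd 1"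
    then obtain i where "1 = (1 - r * s) * i" by (rule dvdE)
    then have "a = i * ((1 - r * s) * a)" by (metis mult.assoc mult.commute mult_1_left)
    then show False using e False by simp
  qed
  then have "r * s dvd 1" using uniserial_not_unit_add[OF assms(1), of "1 - r * s" "r * s"] by auto
  then show ?thesis using r by (metis dvd_mult_left mult.commute)
qed

section \<open>Congruence of lines modulo an ideal\<close>

definition lines_cong :: "'r::comm_ring_1 set \<Rightarrow> ('r^2) set \<Rightarrow> ('r^2) set \<Rightarrow> bool" where
  "lines_cong I L L' \<longleftrightarrow>
     (\<exists>v w. unimodular v \<and> unimodular w \<and> L = line_of v \<and> L' = line_of w \<and> det2 v w \<in> I)"

definition cong_class :: "'r::comm_ring_1 set \<Rightarrow> ('r^2) set \<Rightarrow> ('r^2) set set" where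
  "cong_class I L = {L'. lines_cong I L L'}"

lemma lines_cong_iff:
  assumes I: "is_ideal I" and v: "unimodular v" and w: "unimodular w"
  shows "lines_cong I (line_of v) (line_of w) \<longleftrightarrow> det2 v w \<in> I"
proof
  assume "lines_cong I (line_of v) (line_of w)"
  then obtain v' w' where *: "unimodular v'" "unimodular w'" "line_of v = line_of v'"
      "line_of w = line_of w'" "det2 v' w' \<in> I"
    unfolding lines_cong_def by blast
  obtain u where u: "u dvd 1" "v' = u *s v" using line_of_eq_imp_unit_smult[OF v *(3)] by blast
  obtain u' where u': "u' dvd 1" "w' = u' *s w" using line_of_eq_imp_unit_smult[OF w *(4)] by blast
  obtain i where i: "1 = (u * u') * i" using u u' unit_mult_iff by (metis dvdE)
  have "i * det2 v' w' = ((u * u') * i) * det2 v w" using u u' by (simp add: mult_ac)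
  then have "det2 v w = i * det2 v' w'" using i by simp
  then show "det2 v w \<in> I" using is_ideal_mult[OF I *(5)] by simp
qed (use v w in \<open>auto simp: lines_cong_def\<close>)

lemma lines_cong_in_tits2: "lines_cong I L L' \<Longrightarrow> L \<in> tits2 \<and> L' \<in> tits2"
  unfolding lines_cong_def tits2_eq by blast

lemma cong_class_subset_tits2: "cong_class I L \<subseteq> tits2"
  unfolding cong_class_def using lines_cong_in_tits2 by blast

lemma lines_cong_refl: "is_ideal I \<Longrightarrow> L \<in> tits2 \<Longrightarrow> lines_cong I L L"
  unfolding tits2_eq by (auto simp: lines_cong_iff det2_def mult.commute is_ideal_zero)

lemma lines_cong_sym: assumes I: "is_ideal I" and "lines_cong I L L'" shows "lines_cong I L' L"
proof -
  obtain v w where *: "unimodular v" "unimodular w" "L = line_of v" "L' = line_of w" "det2 v w \<in> I"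
    using assms(2) unfolding lines_cong_def by blast
  then have "det2 w v \<in> I" unfolding det2_swap[of w] using is_ideal_uminus[OF I] by blast
  then show ?thesis unfolding lines_cong_def using * by blast
qed

lemma lines_cong_trans:
  assumes I: "is_ideal I" and "lines_cong I L L'" "lines_cong I L' L''"
  shows "lines_cong I L L''"
proof -
  obtain v x where *: "unimodular v" "unimodular x" "L = line_of v" "L' = line_of x" "det2 v x \<in> I"
    using assms(2) unfolding lines_cong_def by blast
  obtain w where w: "unimodular w" "L'' = line_of w"
    using lines_cong_in_tits2[OF assms(3)] unfolding tits2_eq by blast
  have xw: "det2 x w \<in> I" using assms(3) *(2,4) w lines_cong_iff[OF I *(2) w(1)] by simp
  obtain a b where ab: "a * x$1 + b * x$2 = 1" using *(2) unfolding unimodular_def by blast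
  have "det2 v w = det2 v w * (a * x$1 + b * x$2)" using ab by simp
  also have "\<dots> = a * (det2 v w * x$1) + b * (det2 v w * x$2)" by (simp add: algebra_simps)
  also have "\<dots> \<in> I" unfolding det2_pluecker[of v w x]
    by (intro is_ideal_add[OF I] is_ideal_mult[OF I] is_ideal_mult_right[OF I] *(5) xw)
  finally show ?thesis unfolding lines_cong_def using * w by blast
qed

lemma lines_cong_mono: "I \<subseteq> J \<Longrightarrow> lines_cong I L L' \<Longrightarrow> lines_cong J L L'"
  unfolding lines_cong_def by blast

lemma lines_cong_UNIV: "L \<in> tits2 \<Longrightarrow> L' \<in> tits2 \<Longrightarrow> lines_cong UNIV L L'"
  unfolding lines_cong_def tits2_eq by blast

lemma lines_cong_0: assumes "lines_cong {0} L L'" shows "L = L'"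
proof -
  obtain v w where *: "unimodular v" "unimodular w" "L = line_of v" "L' = line_of w" "det2 v w = 0"
    using assms unfolding lines_cong_def by blast
  have "det2 w v = 0" using *(5) by (simp add: det2_swap[of w])
  then have "w \<in> line_of v" "v \<in> line_of w"
    using det2_eq_0_imp_in_line_of *(1,2,5) by blast+
  then show ?thesis unfolding *(3,4) using line_of_subset by blast
qed

lemma cong_class_eq: "is_ideal I \<Longrightarrow> lines_cong I L L' \<Longrightarrow> cong_class I L = cong_class I L'"
  unfolding cong_class_def using lines_cong_trans lines_cong_sym by blast

lemma cong_class_mem_iff:
  "is_ideal I \<Longrightarrow> lines_cong I L L' \<Longrightarrow> L \<in> cong_class I M \<longleftrightarrow> L' \<in> cong_class I M"
  unfolding cong_class_def mem_Collect_eq by (meson lines_cong_trans lines_cong_sym)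

lemma cong_class_mono: "I \<subseteq> J \<Longrightarrow> cong_class I L \<subseteq> cong_class J L"
  unfolding cong_class_def using lines_cong_mono by blast

lemma finite_lines: "finite (A :: ('r::finite ^2) set set)"
  by (rule finite_subset[of _ UNIV]) auto

lemma cong_class_nonempty: "is_ideal I \<Longrightarrow> L \<in> tits2 \<Longrightarrow> cong_class I L \<noteq> {}"
  unfolding cong_class_def using lines_cong_refl by blast

lemma card_cong_class_pos:
  "is_ideal I \<Longrightarrow> L \<in> tits2 \<Longrightarrow> card (cong_class (I::'r::{comm_ring_1,finite} set) L) > 0"
  using lines_cong_refl[of I L] finite_lines[of "cong_class I L"]
  unfolding cong_class_def by (auto simp: card_gt_0_iff)

lemma in_GL2I: "g ** h = mat 1 \<Longrightarrow> h ** g = mat 1 \<Longrightarrow> g \<in> GL2"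
  unfolding GL2_def invertible_def by blast

lemma GL2_inverse: "g \<in> GL2 \<Longrightarrow> \<exists>h\<in>GL2. g ** h = mat 1 \<and> h ** g = mat 1"
  unfolding GL2_def invertible_def by blast

lemma GL2_mult: "g \<in> GL2 \<Longrightarrow> h \<in> GL2 \<Longrightarrow> g ** h \<in> GL2"
  unfolding GL2_def using invertible_mult by blast

lemma GL2_one: "mat 1 \<in> GL2"
  by (rule in_GL2I[of _ "mat 1"]) simp_all

lemma finite_matrices: "finite (S :: ('r::finite^2^2) set)"
  by (rule finite_subset[of _ UNIV]) auto

lemma pullback_mult: "pullback (g ** h) L = pullback h (pullback g L)"
  unfolding pullback_def by (simp add: matrix_vector_mul_assoc)

lemma pullback_one [simp]: "pullback (mat 1) L = L"
  unfolding pullback_def by simp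

lemma pullback_inverse: "g ** h = mat 1 \<Longrightarrow> pullback h (pullback g L) = L"
  using pullback_mult[of g h L] by simp

lemma pullback_line_of:
  assumes "g \<in> GL2" and "g *v u' = u"
  shows "pullback g (line_of u) = line_of u'"
proof -
  obtain h where h: "h ** g = mat 1" using GL2_inverse[OF assms(1)] by blast
  have inj: "x = y" if "g *v x = g *v y" for x y
    by (metis h matrix_vector_mul_assoc matrix_vector_mul_lid that)
  show ?thesis
  proof (intro set_eqI iffI)
    fix x assume "x \<in> pullback g (line_of u)"
    then obtain r where "g *v x = g *v (r *s u')"
      using assms(2) unfolding pullback_def line_of_def by (auto simp: matrix_vector_mult_smult)
    then show "x \<in> line_of u'" using inj unfolding line_of_def by blast
  qed (use assms(2) in \<open>auto simp: pullback_def line_of_def matrix_vector_mult_smult\<close>)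
qed

lemma pullback_line_of_inverse:
  assumes "g \<in> GL2" and "g ** h = mat 1"
  shows "pullback g (line_of v) = line_of (h *v v)"
  using assms by (intro pullback_line_of) (simp_all add: matrix_vector_mul_assoc)

lemma unimodular_inverse_mult:
  assumes "g ** h = mat 1" and "unimodular v" shows "unimodular (h *v v)"
  by (rule unimodular_of_matrix_vector_mult[of g]) (use assms in \<open>simp add: matrix_vector_mul_assoc\<close>)

lemma pullback_tits2: assumes "g \<in> GL2" and "L \<in> tits2" shows "pullback g L \<in> tits2"
proof -
  obtain v where v: "unimodular v" "L = line_of v" using assms(2) unfolding tits2_eq by blast
  obtain h where h: "g ** h = mat 1" using GL2_inverse[OF assms(1)] by blast
  show ?thesis unfolding tits2_eq v(2) pullback_line_of_inverse[OF assms(1) h]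
    using unimodular_inverse_mult[OF h v(1)] by blast
qed

lemma pullback_tits2_iff: assumes "g \<in> GL2" shows "pullback g L \<in> tits2 \<longleftrightarrow> L \<in> tits2"
proof -
  obtain h where h: "h \<in> GL2" "g ** h = mat 1" using GL2_inverse[OF assms] by blast
  show ?thesis
  proof
    assume "pullback g L \<in> tits2"
    from pullback_tits2[OF h(1) this] show "L \<in> tits2" by (simp add: pullback_inverse[OF h(2)])
  qed (rule pullback_tits2[OF assms])
qed

lemma bij_betw_pullback: assumes "g \<in> GL2" shows "bij_betw (pullback g) tits2 tits2"
proof -
  obtain h where h: "h \<in> GL2" "g ** h = mat 1" "h ** g = mat 1" using GL2_inverse[OF assms] by blast
  show ?thesis
    using pullback_tits2[OF assms] pullback_tits2[OF h(1)]
    by (intro bij_betw_byWitness[where f'="pullback h"])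
       (auto simp: pullback_inverse[OF h(2)] pullback_inverse[OF h(3)])
qed

lemma lines_cong_pullback:
  assumes I: "is_ideal I" and g: "g \<in> GL2" and c: "lines_cong I L L'"
  shows "lines_cong I (pullback g L) (pullback g L')"
proof -
  obtain v w where *: "unimodular v" "unimodular w" "L = line_of v" "L' = line_of w" "det2 v w \<in> I"
    using c unfolding lines_cong_def by blast
  obtain h where h: "g ** h = mat 1" using GL2_inverse[OF g] by blast
  have "det2 (h *v v) (h *v w) \<in> I"
    unfolding det2_matrix_vector_mult using is_ideal_mult[OF I *(5)] .
  then show ?thesis unfolding lines_cong_def *(3,4) pullback_line_of_inverse[OF g h]
    using unimodular_inverse_mult[OF h] *(1,2) by blast
qed

lemma lines_cong_pullback_iff:
  assumes I: "is_ideal I" and g: "g \<in> GL2"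
  shows "lines_cong I (pullback g L) (pullback g L') \<longleftrightarrow> lines_cong I L L'"
proof
  obtain h where h: "h \<in> GL2" "g ** h = mat 1" using GL2_inverse[OF g] by blast
  show "lines_cong I L L'" if "lines_cong I (pullback g L) (pullback g L')"
    using lines_cong_pullback[OF I h(1) that] by (simp add: pullback_inverse[OF h(2)])
qed (rule lines_cong_pullback[OF I g])

lemma bij_betw_pullback_cong_class:
  assumes I: "is_ideal I" and g: "g \<in> GL2"
  shows "bij_betw (pullback g) (cong_class I L) (cong_class I (pullback g L))"
proof -
  obtain h where h: "h \<in> GL2" "g ** h = mat 1" "h ** g = mat 1" using GL2_inverse[OF g] by blast
  show ?thesis
  proof (rule bij_betw_byWitness[where f'="pullback h"])
    show "pullback g ` cong_class I L \<subseteq> cong_class I (pullback g L)"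
      unfolding cong_class_def using lines_cong_pullback[OF I g] by blast
    show "pullback h ` cong_class I (pullback g L) \<subseteq> cong_class I L"
    proof
      fix L' assume "L' \<in> pullback h ` cong_class I (pullback g L)"
      then obtain M where "L' = pullback h M" "lines_cong I (pullback g L) M"
        unfolding cong_class_def by blast
      then show "L' \<in> cong_class I L" unfolding cong_class_def
        using lines_cong_pullback[OF I h(1), of "pullback g L" M]
        by (simp add: pullback_inverse[OF h(2)])
    qed
  qed (simp_all add: pullback_inverse[OF h(2)] pullback_inverse[OF h(3)])
qed

lemma sum_pullback_tits2:
  "g \<in> GL2 \<Longrightarrow> (\<Sum>L\<in>tits2. F (pullback g L)) = (\<Sum>L\<in>tits2. F L)"
  by (rule sum.reindex_bij_betw[OF bij_betw_pullback])

lemma sum_pullback_cong_class: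
  "is_ideal I \<Longrightarrow> g \<in> GL2 \<Longrightarrow>
     (\<Sum>L\<in>cong_class I L1. F (pullback g L)) = (\<Sum>L\<in>cong_class I (pullback g L1). F L)"
  by (rule sum.reindex_bij_betw[OF bij_betw_pullback_cong_class])

lemma st_act_mult: "st_act g (st_act h f) = st_act (g ** h) f"
  unfolding st_act_def by (simp add: matrix_vector_mul_assoc)

lemma st_act_one: "st_act (mat 1) f = f"
  unfolding st_act_def by simp

definition ideal_chain :: "nat \<Rightarrow> (nat \<Rightarrow> 'r::comm_ring_1 set) \<Rightarrow> bool" where
  "ideal_chain n c \<longleftrightarrow> (\<forall>i\<le>n. is_ideal (c i)) \<and> (\<forall>i<n. c i \<subset> c (Suc i))"

definition composition_series :: "nat \<Rightarrow> (nat \<Rightarrow> 'r::comm_ring_1 set) \<Rightarrow> bool" where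
  "composition_series n c \<longleftrightarrow> ideal_chain n c \<and> c 0 = {0} \<and> c n = UNIV \<and>
     (\<forall>i<n. \<forall>J. is_ideal J \<and> c i \<subseteq> J \<and> J \<subseteq> c (Suc i) \<longrightarrow> J = c i \<or> J = c (Suc i))"

lemma ideal_chain_mono:
  assumes "ideal_chain n c" and "i \<le> j" and "j \<le> n"
  shows "c i \<subseteq> c j"
  using assms(2,3)
proof (induction j)
  case (Suc j)
  show ?case
  proof (cases "i = Suc j")
    case False
    then have "c i \<subseteq> c j" using Suc by simp
    moreover have "c j \<subset> c (Suc j)" using assms(1) Suc.prems(2) unfolding ideal_chain_def by simp
    ultimately show ?thesis by blast
  qed simp
qed simp

lemma ideal_chain_le_card:
  assumes "ideal_chain n (c :: nat \<Rightarrow> 'r::{comm_ring_1,finite} set)"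
  shows "n \<le> CARD('r)"
proof -
  have "i \<le> card (c i)" if "i \<le> n" for i
    using that
  proof (induction i)
    case (Suc i)
    then have "card (c i) < card (c (Suc i))"
      using assms unfolding ideal_chain_def by (intro psubset_card_mono) auto
    then show ?case using Suc by simp
  qed simp
  then show ?thesis using card_mono[of UNIV "c n"] by fastforce
qed

lemma ideal_chain_ring_length:
  "\<exists>c. ideal_chain (ring_length TYPE('r::{comm_ring_1,finite})) (c :: nat \<Rightarrow> 'r set)"
  and ideal_chain_le_ring_length:
  "ideal_chain n (c :: nat \<Rightarrow> 'r set) \<Longrightarrow> n \<le> ring_length TYPE('r)"
proof -
  have ring_length_eq: "ring_length TYPE('r) = (GREATEST n. \<exists>c::nat \<Rightarrow> 'r set. ideal_chain n c)"
    unfolding ring_length_def ideal_chain_def ..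
  have bound: "\<forall>n. (\<exists>c::nat \<Rightarrow> 'r set. ideal_chain n c) \<longrightarrow> n \<le> CARD('r)"
    using ideal_chain_le_card by blast
  have chain0: "ideal_chain 0 (\<lambda>_. UNIV :: 'r set)"
    unfolding ideal_chain_def by (simp add: is_ideal_UNIV)
  show "\<exists>c. ideal_chain (ring_length TYPE('r)) (c :: nat \<Rightarrow> 'r set)"
    unfolding ring_length_eq
    by (rule GreatestI_nat[where k=0 and b="CARD('r)"]) (use chain0 bound in blast)+
  show "ideal_chain n (c :: nat \<Rightarrow> 'r set) \<Longrightarrow> n \<le> ring_length TYPE('r)"
    unfolding ring_length_eq by (rule Greatest_le_nat[where b="CARD('r)"]) (use bound in blast)+
qed

text \<open>Insertion of \<open>J\<close> at position \<open>i\<close>; \<open>i = 0\<close> and \<open>i = Suc n\<close> extend the chain at its ends.\<close>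
lemma ideal_chain_insert:
  assumes c: "ideal_chain n c" and J: "is_ideal J" and i: "i \<le> Suc n"
    and below: "0 < i \<Longrightarrow> c (i - 1) \<subset> J" and above: "i \<le> n \<Longrightarrow> J \<subset> c i"
  shows "ideal_chain (Suc n) (\<lambda>m. if m < i then c m else if m = i then J else c (m - 1))"
  unfolding ideal_chain_def
proof (intro conjI allI impI)
  fix m assume "m \<le> Suc n"
  then show "is_ideal (if m < i then c m else if m = i then J else c (m - 1))"
    using c J i unfolding ideal_chain_def by auto
next
  fix m assume m: "m < Suc n"
  consider "Suc m < i" | "Suc m = i" | "m = i" | "i < m" by linarith
  then show "(if m < i then c m else if m = i then J else c (m - 1))
      \<subset> (if Suc m < i then c (Suc m) else if Suc m = i then J else c (Suc m - 1))"
  proof cases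
    case 4
    then have "m - 1 < n" and m1: "Suc (m - 1) = m" using m by auto
    then have "c (m - 1) \<subset> c (Suc (m - 1))" using c unfolding ideal_chain_def by blast
    then show ?thesis using 4 by (simp add: m1)
  qed (use c i m below above in \<open>auto simp: ideal_chain_def\<close>)
qed

lemma composition_series_exists:
  "\<exists>c. composition_series (ring_length TYPE('r::{comm_ring_1,finite})) (c :: nat \<Rightarrow> 'r set)"
proof -
  define k where "k = ring_length TYPE('r)"
  obtain c :: "nat \<Rightarrow> 'r set" where c: "ideal_chain k c"
    using ideal_chain_ring_length unfolding k_def by blast
  have no_insert: False
    if "is_ideal J" "i \<le> Suc k" "0 < i \<Longrightarrow> c (i - 1) \<subset> J" "i \<le> k \<Longrightarrow> J \<subset> c i" for J i
    using ideal_chain_le_ring_length[OF ideal_chain_insert[OF c that]] unfolding k_def by simp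
  have ideal: "is_ideal (c i)" if "i \<le> k" for i using c that unfolding ideal_chain_def by blast
  have "{0} \<subset> c 0 \<or> c 0 = {0}" using is_ideal_zero[OF ideal[of 0]] by blast
  then have c0: "c 0 = {0}" using no_insert[of "{0}" 0] is_ideal_0 by auto
  have ck: "c k = UNIV" using no_insert[of UNIV "Suc k"] is_ideal_UNIV by auto
  have cover: "J = c i \<or> J = c (Suc i)"
    if "i < k" "is_ideal J" "c i \<subseteq> J" "J \<subseteq> c (Suc i)" for i J
    using no_insert[of J "Suc i"] that by auto
  have "composition_series k c" unfolding composition_series_def
    using c c0 ck cover by (intro conjI allI impI) auto
  then show ?thesis unfolding k_def by blast
qed

section \<open>The layers of the Steinberg module\<close>

lemma fsubspace_zero: "fsubspace U \<Longrightarrow> (\<lambda>_. 0) \<in> U"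
  and fsubspace_add: "fsubspace U \<Longrightarrow> x \<in> U \<Longrightarrow> y \<in> U \<Longrightarrow> (\<lambda>a. x a + y a) \<in> U"
  and fsubspace_scale: "fsubspace U \<Longrightarrow> x \<in> U \<Longrightarrow> (\<lambda>a. c * x a) \<in> U"
  unfolding fsubspace_def by blast+

lemma fsubspace_diff: "fsubspace U \<Longrightarrow> x \<in> U \<Longrightarrow> y \<in> U \<Longrightarrow> (\<lambda>a. x a - y a) \<in> U"
  using fsubspace_add[of U x "\<lambda>a. (-1) * y a"] fsubspace_scale[of U y "-1"] by simp

lemma fsubspace_sum:
  assumes "fsubspace U" and "finite S" and "\<And>x. x \<in> S \<Longrightarrow> F x \<in> U"
  shows "(\<lambda>a. \<Sum>x\<in>S. F x a) \<in> U"
  using assms(2,3)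
proof (induction S rule: finite_induct)
  case (insert x S)
  then show ?case using fsubspace_add[OF assms(1), of "F x"] by simp
qed (simp add: fsubspace_zero[OF assms(1)])

lemma fsubspace_image:
  assumes W: "fsubspace W" and T: "flinear_on W T (\<lambda>x y a. x a + y a) (\<lambda>c x a. c * x a)"
  shows "fsubspace (T ` W)"
  unfolding fsubspace_def
proof (intro conjI ballI allI)
  have "T (\<lambda>_. 0) = (\<lambda>_. 0)"
    using T[unfolded flinear_on_def, THEN conjunct2, rule_format, OF fsubspace_zero[OF W], of 0] by simp
  then show "(\<lambda>_. 0) \<in> T ` W" using fsubspace_zero[OF W] by (metis image_eqI)
next
  fix x y assume "x \<in> T ` W" "y \<in> T ` W"
  then obtain x' y' where x': "x' \<in> W" "x = T x'" and y': "y' \<in> W" "y = T y'" by blast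
  then have "(\<lambda>a. x a + y a) = T (\<lambda>a. x' a + y' a)" using T unfolding flinear_on_def by simp
  then show "(\<lambda>a. x a + y a) \<in> T ` W" using fsubspace_add[OF W x'(1) y'(1)] by blast
next
  fix c x assume "x \<in> T ` W"
  then obtain x' where x': "x' \<in> W" "x = T x'" by blast
  then have "(\<lambda>a. c * x a) = T (\<lambda>a. c * x' a)" using T unfolding flinear_on_def by simp
  then show "(\<lambda>a. c * x a) \<in> T ` W" using fsubspace_scale[OF W x'(1)] by blast
qed

lemma invariant_image:
  assumes "invariant G act W" and "\<And>g w. g \<in> G \<Longrightarrow> w \<in> W \<Longrightarrow> T (act g w) = act g (T w)"
  shows "invariant G act (T ` W)"
  unfolding invariant_def
proof (intro ballI)
  fix g x assume "g \<in> G" "x \<in> T ` W"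
  then obtain w where "w \<in> W" "x = T w" by blast
  then have "act g x = T (act g w)" using assms(2) \<open>g \<in> G\<close> by simp
  moreover have "act g w \<in> W" using assms(1) \<open>g \<in> G\<close> \<open>w \<in> W\<close> unfolding invariant_def by blast
  ultimately show "act g x \<in> T ` W" by blast
qed

definition layer :: "'r::{comm_ring_1,finite} set \<Rightarrow> 'r set \<Rightarrow> (('r^2) set \<Rightarrow> 'k::field) set" where
  "layer I J = {f \<in> steinberg2. (\<forall>L L'. lines_cong I L L' \<longrightarrow> f L = f L') \<and>
                                (\<forall>L\<in>tits2. sum f (cong_class J L) = 0)}"

lemma steinberg2_iff: "f \<in> steinberg2 \<longleftrightarrow> (\<forall>L. L \<notin> tits2 \<longrightarrow> f L = 0) \<and> sum f tits2 = 0"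
  unfolding steinberg2_def by simp

lemma fsubspace_layer: "fsubspace (layer I J)"
  unfolding fsubspace_def layer_def steinberg2_iff
  by (auto simp: sum.distrib sum_distrib_left[symmetric])

lemma st_act_steinberg2:
  assumes "g \<in> GL2" and "f \<in> steinberg2" shows "st_act g f \<in> steinberg2"
  using assms pullback_tits2_iff[OF assms(1)] sum_pullback_tits2[OF assms(1), of f]
  unfolding steinberg2_iff st_act_eq_pullback by auto

lemma st_act_layer:
  assumes I: "is_ideal I" and J: "is_ideal J" and g: "g \<in> GL2" and f: "f \<in> layer I J"
  shows "st_act g f \<in> layer I J"
  using f st_act_steinberg2[OF g] lines_cong_pullback[OF I g] pullback_tits2[OF g]
    sum_pullback_cong_class[OF J g, of f]
  unfolding layer_def st_act_eq_pullback by auto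

lemma invariant_layer: "is_ideal I \<Longrightarrow> is_ideal J \<Longrightarrow> invariant GL2 st_act (layer I J)"
  unfolding invariant_def using st_act_layer by blast

definition std_line :: "('r::comm_ring_1^2) set" where
  "std_line = line_of (vec2 1 0)"

definition std_borel :: "('r::comm_ring_1^2^2) set" where
  "std_borel = {g \<in> GL2. pullback g std_line = std_line}"

lemma std_line_tits2: "std_line \<in> tits2"
  unfolding std_line_def tits2_eq using unimodular_vec2_1 by blast

lemma lines_cong_std_line:
  assumes "is_ideal I" and "unimodular v"
  shows "lines_cong I std_line (line_of v) \<longleftrightarrow> v$2 \<in> I"
  using lines_cong_iff[OF assms(1) unimodular_vec2_1 assms(2)]
  unfolding std_line_def by (simp add: det2_def)

lemma GL2_transitive: assumes "L \<in> tits2" shows "\<exists>g\<in>GL2. pullback g std_line = L"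
proof -
  obtain v where v: "unimodular v" "L = line_of v" using assms unfolding tits2_eq by blast
  obtain r s where rs: "r * v$1 + s * v$2 = 1" using v(1) unfolding unimodular_def by blast
  let ?g = "mat2 r s (-(v$2)) (v$1)"
  have "?g \<in> GL2"
    by (rule in_GL2I[of _ "mat2 (v$1) (-s) (v$2) r"])
       (use rs in \<open>simp_all add: mat2_one algebra_simps\<close>)
  moreover have "?g *v v = vec2 1 0" unfolding mat2_mult_vec using rs by (simp add: algebra_simps)
  ultimately show ?thesis unfolding std_line_def v(2) using pullback_line_of by blast
qed

lemma std_borel_GL2: "b \<in> std_borel \<Longrightarrow> b \<in> GL2"
  unfolding std_borel_def by simp

lemma one_in_std_borel: "mat 1 \<in> std_borel"
  unfolding std_borel_def using GL2_one by simp

lemma upper_triangular_in_std_borel: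
  assumes x: "x dvd 1" and z: "z dvd 1"
  shows "mat2 x y 0 z \<in> std_borel"
proof -
  obtain x' where x': "1 = x * x'" using x by (rule dvdE)
  obtain z' where z': "1 = z * z'" using z by (rule dvdE)
  have "x * (- (x' * y * z')) + y * z' = (- (x * x')) * y * z' + y * z'" by (simp add: algebra_simps)
  then have a1: "x * (- (x' * y * z')) + y * z' = 0" by (simp flip: x')
  have "x' * y + - (x' * y * z') * z = x' * y - x' * y * (z * z')" by (simp add: algebra_simps)
  then have a2: "x' * y + - (x' * y * z') * z = 0" by (simp flip: z')
  have g: "mat2 x y 0 z \<in> GL2"
    by (rule in_GL2I[of _ "mat2 x' (-(x' * y * z')) 0 z'"])
       (use a1 a2 x' z' in \<open>simp_all add: mat2_one mult.commute\<close>)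
  have "mat2 x y 0 z *v (x' *s vec2 1 0) = vec2 1 0" using x' by (simp add: mult.commute)
  then have "pullback (mat2 x y 0 z) std_line = line_of (x' *s vec2 1 0)"
    unfolding std_line_def by (rule pullback_line_of[OF g])
  also have "\<dots> = std_line" unfolding std_line_def
    by (rule line_of_unit_smult) (use x' in \<open>metis dvdI mult.commute\<close>)
  finally show ?thesis unfolding std_borel_def using g by simp
qed

lemma std_borel_mult: assumes "b \<in> std_borel" "b' \<in> std_borel" shows "b ** b' \<in> std_borel"
  using assms unfolding std_borel_def by (auto simp: pullback_mult intro: GL2_mult)

lemma std_borel_inverse:
  assumes "b \<in> std_borel" shows "\<exists>h\<in>std_borel. b ** h = mat 1 \<and> h ** b = mat 1"
proof -
  obtain h where h: "h \<in> GL2" "b ** h = mat 1" "h ** b = mat 1"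
    using GL2_inverse std_borel_GL2[OF assms] by blast
  have "pullback h std_line = pullback h (pullback b std_line)"
    using assms unfolding std_borel_def by simp
  also have "\<dots> = std_line" using pullback_inverse[OF h(2)] .
  finally show ?thesis using h unfolding std_borel_def by blast
qed

lemma bij_betw_mult_left:
  assumes closed: "\<And>x y. x \<in> S \<Longrightarrow> y \<in> S \<Longrightarrow> x ** y \<in> S"
    and inverse: "\<And>x. x \<in> S \<Longrightarrow> \<exists>h\<in>S. x ** h = mat 1 \<and> h ** x = mat 1"
    and g: "g \<in> S"
  shows "bij_betw (\<lambda>x. g ** x) S (S :: ('r::comm_ring_1^'n^'n) set)"
proof -
  obtain h where h: "h \<in> S" "g ** h = mat 1" "h ** g = mat 1" using inverse g by blast
  show ?thesis
    by (rule bij_betw_byWitness[where f'="\<lambda>x. h ** x"])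
       (use h closed g in \<open>auto simp: matrix_mul_assoc\<close>)
qed

lemma sum_std_borel_mult_left:
  "b \<in> std_borel \<Longrightarrow> (\<Sum>x\<in>std_borel. F (b ** x)) = (\<Sum>x\<in>std_borel. F x)"
  by (rule sum.reindex_bij_betw[OF bij_betw_mult_left]) (auto intro: std_borel_mult std_borel_inverse)

lemma sum_GL2_mult_left:
  "g \<in> GL2 \<Longrightarrow> (\<Sum>x\<in>GL2. F (g ** x)) = (\<Sum>x\<in>GL2. F x)"
  by (rule sum.reindex_bij_betw[OF bij_betw_mult_left]) (auto intro: GL2_mult GL2_inverse)

lemma std_borel_orbit:
  fixes v w :: "'r::comm_ring_1^2"
  assumes U: "uniserial TYPE('r)" and v: "unimodular v" and w: "unimodular w"
    and "v$2 dvd w$2" and "w$2 dvd v$2"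
  shows "\<exists>g\<in>std_borel. pullback g (line_of w) = line_of v"
proof -
  obtain u where u: "u dvd 1" "w$2 = u * v$2" using uniserial_associated[OF U assms(4,5)] by blast
  have "\<exists>b\<in>std_borel. b *v v = w"
  proof (cases "v$2 dvd 1")
    case True
    then obtain i where i: "1 = v$2 * i" by (rule dvdE)
    have "((w$1 - v$1) * i) * v$2 = (w$1 - v$1) * (v$2 * i)" by (simp add: mult_ac)
    then have "v$1 + ((w$1 - v$1) * i) * v$2 = w$1" by (simp flip: i)
    then have "mat2 1 ((w$1 - v$1) * i) 0 u *v v = w"
      unfolding mat2_mult_vec using u(2) by (simp add: vec_eq_iff forall_2)
    then show ?thesis using upper_triangular_in_std_borel[OF one_dvd u(1)] by blast
  next
    case False
    then have v1: "v$1 dvd 1" using uniserial_unimodular_unit[OF U v] by blast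
    have "\<not> w$2 dvd 1" using False u(2) by (simp add: unit_mult_iff)
    then have w1: "w$1 dvd 1" using uniserial_unimodular_unit[OF U w] by blast
    obtain i where i: "1 = v$1 * i" using v1 by (rule dvdE)
    have x: "w$1 * i dvd 1" using w1 i by (metis dvdI mult.commute unit_mult_iff)
    have "(w$1 * i) * v$1 = w$1 * (v$1 * i)" by (simp add: mult_ac)
    then have "(w$1 * i) * v$1 = w$1" by (simp flip: i)
    then have "mat2 (w$1 * i) 0 0 u *v v = w"
      unfolding mat2_mult_vec using u(2) by (simp add: vec_eq_iff forall_2)
    then show ?thesis using upper_triangular_in_std_borel[OF x u(1)] by blast
  qed
  then obtain b where b: "b \<in> std_borel" "b *v v = w" by blast
  then show ?thesis using pullback_line_of[OF std_borel_GL2] by blast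
qed

definition pairing :: "(('r::comm_ring_1^2) set \<Rightarrow> 'k::field) \<Rightarrow> (('r^2) set \<Rightarrow> 'k) \<Rightarrow> 'k" where
  "pairing f h = (\<Sum>L\<in>tits2. f L * h L)"

lemma pairing_commute: "pairing f h = pairing h f"
  unfolding pairing_def by (simp add: mult.commute)

lemma pairing_st_act: "g \<in> GL2 \<Longrightarrow> pairing (st_act g a) (st_act g b) = pairing a b"
  unfolding pairing_def st_act_eq_pullback by (rule sum_pullback_tits2)

lemma pairing_sum_left:
  "pairing (\<lambda>L. \<Sum>g\<in>S. a g * \<phi> g L) f = (\<Sum>g\<in>S. a g * pairing (\<phi> g) f)"
  unfolding pairing_def
  by (simp add: sum_distrib_right sum_distrib_left mult.assoc sum.swap[of _ tits2])

lemma pairing_diff_left: "pairing (\<lambda>L. a L - b L) f = pairing a f - pairing b f"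
  unfolding pairing_def by (simp add: left_diff_distrib sum_subtractf)

lemma pairing_scale_left: "pairing (\<lambda>L. c * a L) f = c * pairing a f"
  and pairing_scale_right: "pairing a (\<lambda>L. c * b L) = c * pairing a b"
  unfolding pairing_def by (simp_all add: sum_distrib_left mult_ac)

section \<open>An irreducibility criterion\<close>

definition orbit_operator ::
  "(('r::{comm_ring_1,finite}^2) set \<Rightarrow> 'k::field) \<Rightarrow> (('r^2) set \<Rightarrow> 'k) \<Rightarrow> (('r^2) set \<Rightarrow> 'k)" where
  "orbit_operator \<psi> h = (\<lambda>L. \<Sum>g\<in>GL2. pairing h (st_act g \<psi>) * st_act g \<psi> L)"

lemma orbit_operator_in_subspace:
  assumes "fsubspace U" and "invariant GL2 st_act U" and "\<psi> \<in> U"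
  shows "orbit_operator \<psi> h \<in> U"
  unfolding orbit_operator_def
  by (rule fsubspace_sum[OF assms(1) finite_matrices])
     (use assms in \<open>auto simp: invariant_def intro!: fsubspace_scale[OF assms(1)]\<close>)

lemma orbit_operator_st_act:
  assumes g: "g \<in> GL2"
  shows "st_act g (orbit_operator \<psi> h) = orbit_operator \<psi> (st_act g h)"
proof
  fix L
  have "st_act g (orbit_operator \<psi> h) L
      = (\<Sum>x\<in>GL2. pairing h (st_act x \<psi>) * st_act (g ** x) \<psi> L)"
    unfolding orbit_operator_def st_act_eq_pullback[of g]
    by (simp add: st_act_mult[symmetric] st_act_eq_pullback)
  also have "\<dots> = (\<Sum>x\<in>GL2. pairing (st_act g h) (st_act (g ** x) \<psi>) * st_act (g ** x) \<psi> L)"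
    by (rule sum.cong) (simp_all add: st_act_mult[symmetric] pairing_st_act[OF g])
  also have "\<dots> = orbit_operator \<psi> (st_act g h) L"
    unfolding orbit_operator_def by (rule sum_GL2_mult_left[OF g])
  finally show "st_act g (orbit_operator \<psi> h) L = orbit_operator \<psi> (st_act g h) L" .
qed

lemma pairing_orbit_operator:
  "pairing (orbit_operator \<psi> h) f = (\<Sum>g\<in>GL2. pairing h (st_act g \<psi>) * pairing (st_act g \<psi>) f)"
  unfolding orbit_operator_def by (rule pairing_sum_left)

lemma pairing_orbit_operator_commute: "pairing (orbit_operator \<psi> h) f = pairing h (orbit_operator \<psi> f)"
  unfolding pairing_commute[of h] pairing_orbit_operator
  by (simp add: pairing_commute mult.commute)

lemma flinear_on_orbit_operator_minus_scalar:
  "flinear_on W (\<lambda>h L. orbit_operator \<psi> h L - c * h L) (\<lambda>x y a. x a + y a) (\<lambda>c x a. c * x a)"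
  unfolding flinear_on_def orbit_operator_def pairing_def
  by (simp add: algebra_simps sum.distrib sum_distrib_left)

text \<open>
  If every nonzero invariant subspace of \<open>W\<close> contains \<open>\<psi>\<close> and \<open>\<psi>\<close> is an eigenvector of the
  orbit operator, then the orbit operator is scalar on \<open>W\<close>: otherwise its image under
  \<open>orbit_operator \<psi> - c\<close> would contain \<open>\<psi>\<close>, which is orthogonal to that image by self-adjointness.\<close>
lemma orbit_operator_scalar:
  fixes W :: "(('r::{comm_ring_1,finite}^2) set \<Rightarrow> 'k::field) set"
  assumes W: "fsubspace W" "invariant GL2 st_act W" and \<psi>: "\<psi> \<in> W"
    and cyclic: "\<And>U. fsubspace U \<Longrightarrow> invariant GL2 st_act U \<Longrightarrow> U \<subseteq> W \<Longrightarrow>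
                   U \<noteq> {\<lambda>_. 0} \<Longrightarrow> \<psi> \<in> U"
    and eigen: "orbit_operator \<psi> \<psi> = (\<lambda>L. c * \<psi> L)"
    and nondegenerate: "pairing \<psi> \<psi> \<noteq> 0"
    and h: "h \<in> W"
  shows "orbit_operator \<psi> h = (\<lambda>L. c * h L)"
proof -
  define T where "T h = (\<lambda>L. orbit_operator \<psi> h L - c * h L)" for h
  have TW: "T ` W \<subseteq> W"
    unfolding T_def using orbit_operator_in_subspace[OF W \<psi>] fsubspace_diff[OF W(1)]
      fsubspace_scale[OF W(1)] by blast
  have "fsubspace (T ` W)"
    unfolding T_def by (rule fsubspace_image[OF W(1) flinear_on_orbit_operator_minus_scalar])
  moreover have "invariant GL2 st_act (T ` W)"
    by (rule invariant_image[OF W(2)])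
       (simp add: T_def orbit_operator_st_act[symmetric] st_act_eq_pullback fun_eq_iff)
  moreover have "\<psi> \<notin> T ` W"
  proof
    assume "\<psi> \<in> T ` W"
    then obtain f where f: "\<psi> = T f" by blast
    have "pairing \<psi> \<psi> = pairing (T f) \<psi>" by (subst (1) f) (rule refl)
    also have "\<dots> = pairing f (orbit_operator \<psi> \<psi>) - c * pairing f \<psi>"
      unfolding T_def pairing_diff_left pairing_scale_left pairing_orbit_operator_commute ..
    also have "\<dots> = 0" by (simp add: eigen pairing_scale_right)
    finally show False using nondegenerate by simp
  qed
  ultimately have "T ` W = {\<lambda>_. 0}" using cyclic TW by blast
  then have "T h = (\<lambda>_. 0)" using h by blast
  then show ?thesis unfolding T_def by (simp add: fun_eq_iff)
qed

lemma irreducible_repI: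
  fixes W :: "(('r::{comm_ring_1,finite}^2) set \<Rightarrow> 'k::field) set"
  assumes W: "fsubspace W" "invariant GL2 st_act W" and \<psi>: "\<psi> \<in> W" "\<psi> \<noteq> (\<lambda>_. 0)"
    and cyclic: "\<And>U. fsubspace U \<Longrightarrow> invariant GL2 st_act U \<Longrightarrow> U \<subseteq> W \<Longrightarrow>
                   U \<noteq> {\<lambda>_. 0} \<Longrightarrow> \<psi> \<in> U"
    and eigen: "orbit_operator \<psi> \<psi> = (\<lambda>L. c * \<psi> L)" and "c \<noteq> 0"
    and nondegenerate: "pairing \<psi> \<psi> \<noteq> 0"
  shows "irreducible_rep GL2 st_act W"
  unfolding irreducible_rep_def
proof (intro conjI allI impI W)
  show "W \<noteq> {\<lambda>_. 0}" using \<psi> by blast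
next
  fix U assume U: "fsubspace U \<and> invariant GL2 st_act U \<and> U \<subseteq> W"
  show "U = {\<lambda>_. 0} \<or> U = W"
  proof (cases "U = {\<lambda>_. 0}")
    case False
    then have "\<psi> \<in> U" using cyclic U by blast
    have "h \<in> U" if h: "h \<in> W" for h
    proof -
      have "(\<lambda>L. (1 / c) * orbit_operator \<psi> h L) \<in> U"
        using U orbit_operator_in_subspace \<open>\<psi> \<in> U\<close> fsubspace_scale by blast
      then show ?thesis
        using orbit_operator_scalar[OF W \<psi>(1) cyclic eigen nondegenerate h] \<open>c \<noteq> 0\<close> by simp
    qed
    then show ?thesis using U by blast
  qed simp
qed

lemma uniserial_dvd_of_covers:
  assumes U: "uniserial TYPE('r::comm_ring_1)" and I: "is_ideal (I::'r set)" and J: "is_ideal J"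
    and covers: "\<forall>K. is_ideal K \<and> I \<subseteq> K \<and> K \<subseteq> J \<longrightarrow> K = I \<or> K = J"
    and x: "x \<in> J" "x \<notin> I" and y: "y \<in> J"
  shows "x dvd y"
proof -
  have "I \<subseteq> {z. x dvd z}" using uniserial_dvd_of_not_in_ideal[OF U I x(2)] by blast
  moreover have "{z. x dvd z} \<subseteq> J" using is_ideal_dvd[OF J x(1)] by blast
  ultimately have "{z. x dvd z} = I \<or> {z. x dvd z} = J" using covers is_ideal_multiples[of x] by simp
  moreover have "x \<in> {z. x dvd z}" by simp
  ultimately show ?thesis using x(2) y by blast
qed

lemma uniserial_dvd_of_lines_cong:
  fixes v w :: "'r::comm_ring_1^2"
  assumes U: "uniserial TYPE('r)" and J: "is_ideal J" and v: "unimodular v"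
    and d: "det2 v w \<in> J" and "v$2 \<notin> J"
  shows "v$2 dvd w$2"
proof -
  obtain a b where ab: "a * v$1 + b * v$2 = 1" using v unfolding unimodular_def by blast
  have "w$2 - (a * w$1 + b * w$2) * v$2 = w$2 * (a * v$1 + b * v$2) - (a * w$1 + b * w$2) * v$2"
    by (simp add: ab)
  also have "\<dots> = a * det2 v w" by (simp add: det2_def algebra_simps)
  finally have "v$2 dvd w$2 - (a * w$1 + b * w$2) * v$2"
    using uniserial_dvd_of_not_in_ideal[OF U J \<open>v$2 \<notin> J\<close>] is_ideal_mult[OF J d] by simp
  then show ?thesis by (metis dvd_add dvd_triv_right diff_add_cancel)
qed

lemma st_act_fixed_const_on_std_borel_orbit:
  assumes U: "uniserial TYPE('r::comm_ring_1)" and fixed: "\<forall>b\<in>std_borel. st_act b f = f"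
    and v: "unimodular (v::'r^2)" and w: "unimodular w" and "v$2 dvd w$2" "w$2 dvd v$2"
  shows "f (line_of v) = f (line_of w)"
proof -
  obtain b where b: "b \<in> std_borel" "pullback b (line_of w) = line_of v"
    using std_borel_orbit[OF U v w assms(5,6)] by blast
  then have "f (line_of v) = st_act b f (line_of w)" by (simp add: st_act_eq_pullback)
  also have "\<dots> = f (line_of w)" using fixed b(1) by simp
  finally show ?thesis .
qed

lemma st_act_fixed_const_on_cong_class:
  assumes U: "uniserial TYPE('r::comm_ring_1)" and J: "is_ideal (J::'r set)"
    and fixed: "\<forall>b\<in>std_borel. st_act b f = f"
    and c: "lines_cong J L L'" and not_std: "\<not> lines_cong J std_line L"
  shows "f L = f L'"
proof -
  obtain v w where v: "unimodular v" "L = line_of v" and w: "unimodular w" "L' = line_of w"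
    and d: "det2 v w \<in> J"
    using c unfolding lines_cong_def by blast
  have d': "det2 w v \<in> J"
    using lines_cong_sym[OF J c] lines_cong_iff[OF J w(1) v(1)] v(2) w(2) by simp
  have "v$2 \<notin> J" using not_std lines_cong_std_line[OF J v(1)] v(2) by simp
  moreover have "w$2 \<notin> J"
    using not_std lines_cong_std_line[OF J w(1)] w(2) lines_cong_trans[OF J _ lines_cong_sym[OF J c]]
    by blast
  ultimately have "v$2 dvd w$2" "w$2 dvd v$2"
    using uniserial_dvd_of_lines_cong[OF U J] v(1) w(1) d d' by blast+
  then show ?thesis
    unfolding v(2) w(2) by (rule st_act_fixed_const_on_std_borel_orbit[OF U fixed v(1) w(1)])
qed

lemma std_borel_fixed_layer_off_std_class:
  fixes f :: "('r::{comm_ring_1,finite}^2) set \<Rightarrow> 'k::field_char_0"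
  assumes U: "uniserial TYPE('r)" and J: "is_ideal J" and f: "f \<in> layer I J"
    and fixed: "\<forall>b\<in>std_borel. st_act b f = f" and L: "L \<notin> cong_class J std_line"
  shows "f L = 0"
proof (cases "L \<in> tits2")
  case True
  have "f L' = f L" if "L' \<in> cong_class J L" for L'
    using st_act_fixed_const_on_cong_class[OF U J fixed, of L L'] that L unfolding cong_class_def by simp
  then have "sum f (cong_class J L) = (\<Sum>L'\<in>cong_class J L. f L)" by (rule sum.cong[OF refl])
  then have "of_nat (card (cong_class J L)) * f L = 0" using f True unfolding layer_def by simp
  then show ?thesis
    using card_cong_class_pos[OF J True] by (metis mult_eq_0_iff of_nat_eq_0_iff less_irrefl)
qed (use f in \<open>simp add: layer_def steinberg2_iff\<close>)

lemma std_borel_average: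
  fixes h :: "('r::comm_ring_1^2) set \<Rightarrow> 'k::field"
  defines "avg \<equiv> \<lambda>L. \<Sum>b\<in>std_borel. st_act b h L"
  shows "\<forall>b\<in>std_borel. st_act b avg = avg"
    and "avg std_line = of_nat (card (std_borel :: ('r^2^2) set)) * h std_line"
proof -
  show "\<forall>b\<in>std_borel. st_act b avg = avg"
  proof (intro ballI ext)
    fix b :: "'r^2^2" and L assume b: "b \<in> std_borel"
    have "st_act b avg L = (\<Sum>x\<in>std_borel. st_act (b ** x) h L)"
      unfolding avg_def st_act_eq_pullback[of b] by (simp add: st_act_mult[symmetric] st_act_eq_pullback)
    also have "\<dots> = avg L" unfolding avg_def by (rule sum_std_borel_mult_left[OF b])
    finally show "st_act b avg L = avg L" .
  qed
  show "avg std_line = of_nat (card (std_borel :: ('r^2^2) set)) * h std_line"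
    unfolding avg_def st_act_eq_pullback by (simp add: std_borel_def)
qed

locale layer_step =
  fixes I J :: "'r::{comm_ring_1,finite} set" and t :: 'r
  assumes uniserial: "uniserial TYPE('r)" and ideal_I: "is_ideal I" and ideal_J: "is_ideal J"
    and subset: "I \<subseteq> J" and covers: "\<forall>K. is_ideal K \<and> I \<subseteq> K \<and> K \<subseteq> J \<longrightarrow> K = I \<or> K = J"
    and t_in_J: "t \<in> J" and t_notin_I: "t \<notin> I"
begin

definition inner_orbit :: "('r^2) set set" where "inner_orbit = cong_class I std_line"
definition outer_orbit :: "('r^2) set set" where
  "outer_orbit = cong_class J std_line - cong_class I std_line"
definition line_t :: "('r^2) set" where "line_t = line_of (vec2 1 t)"

text \<open>
  The Borel-fixed vector of the layer: constant on the two Borel orbits making up the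
  \<open>J\<close>-class of the standard line, weighted so that this class sums to zero. It is integer
  valued so that its self-pairings are visibly nonzero in characteristic zero.\<close>
definition psi_int :: "('r^2) set \<Rightarrow> int" where
  "psi_int L = (if L \<in> inner_orbit then - int (card outer_orbit)
                else if L \<in> outer_orbit then int (card inner_orbit) else 0)"

definition psi :: "('r^2) set \<Rightarrow> 'k::field" where "psi L = of_int (psi_int L)"

lemma line_t_in_outer_orbit: "line_t \<in> outer_orbit"
  using lines_cong_std_line[OF ideal_J unimodular_vec2_1]
    lines_cong_std_line[OF ideal_I unimodular_vec2_1]
    t_in_J t_notin_I
  unfolding outer_orbit_def line_t_def cong_class_def by simp

lemma std_line_in_inner_orbit: "std_line \<in> inner_orbit"
  unfolding inner_orbit_def cong_class_def using lines_cong_refl[OF ideal_I std_line_tits2] by simp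

lemma card_outer_orbit_pos: "card outer_orbit > 0"
  using line_t_in_outer_orbit finite_lines[of outer_orbit] by (auto simp: card_gt_0_iff)

lemma card_inner_orbit_pos: "card inner_orbit > 0"
  using std_line_in_inner_orbit finite_lines[of inner_orbit] by (auto simp: card_gt_0_iff)

lemma orbits_partition:
  "cong_class J std_line = inner_orbit \<union> outer_orbit" "inner_orbit \<inter> outer_orbit = {}"
  unfolding inner_orbit_def outer_orbit_def using cong_class_mono[OF subset] by auto

lemma psi_int_off: "L \<notin> cong_class J std_line \<Longrightarrow> psi_int L = 0"
  unfolding psi_int_def using orbits_partition by auto

lemma psi_int_const: assumes "lines_cong I L L'" shows "psi_int L = psi_int L'"
  using cong_class_mem_iff[OF ideal_I assms]
    cong_class_mem_iff[OF ideal_J lines_cong_mono[OF subset assms]]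
  unfolding psi_int_def inner_orbit_def outer_orbit_def by simp

lemma sum_psi_int_std_class: "sum psi_int (cong_class J std_line) = 0"
proof -
  have "sum psi_int (cong_class J std_line) = sum psi_int inner_orbit + sum psi_int outer_orbit"
    unfolding orbits_partition by (rule sum.union_disjoint) (use orbits_partition finite_lines in auto)
  also have "\<dots> = (\<Sum>L\<in>inner_orbit. - int (card outer_orbit)) + (\<Sum>L\<in>outer_orbit. int (card inner_orbit))"
    using orbits_partition by (intro arg_cong2[where f="(+)"] sum.cong) (auto simp: psi_int_def)
  finally show ?thesis by simp
qed

lemma sum_psi_int_cong_class: assumes "L \<in> tits2" shows "sum psi_int (cong_class J L) = 0"
proof (cases "lines_cong J std_line L")
  case True then show ?thesis using cong_class_eq[OF ideal_J True] sum_psi_int_std_class by simp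
next
  case False
  then have "cong_class J L \<inter> cong_class J std_line = {}"
    unfolding cong_class_def using lines_cong_trans[OF ideal_J] lines_cong_sym[OF ideal_J] by blast
  then show ?thesis using psi_int_off by (metis disjoint_iff sum.neutral)
qed

lemma psi_in_layer: "(psi :: _ \<Rightarrow> 'k::field) \<in> layer I J"
proof -
  have "sum psi_int tits2 = sum psi_int (cong_class J std_line)"
    by (rule sum.mono_neutral_right) (use cong_class_subset_tits2 psi_int_off finite_lines in auto)
  moreover have "psi_int L = 0" if "L \<notin> tits2" for L
    using that cong_class_subset_tits2 psi_int_off by blast
  ultimately show ?thesis
    using psi_int_const sum_psi_int_cong_class sum_psi_int_std_class
    unfolding layer_def steinberg2_iff psi_def by (auto simp flip: of_int_sum)
qed

lemma psi_std_line: "psi std_line = - of_nat (card outer_orbit)"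
  unfolding psi_def psi_int_def using std_line_in_inner_orbit by simp

lemma psi_outer_orbit: "L \<in> outer_orbit \<Longrightarrow> psi L = of_nat (card inner_orbit)"
  unfolding psi_def psi_int_def using orbits_partition by auto

lemma psi_std_line_neq_line_t: "psi std_line \<noteq> (psi line_t :: 'k::field_char_0)"
  unfolding psi_std_line psi_outer_orbit[OF line_t_in_outer_orbit]
  using card_inner_orbit_pos card_outer_orbit_pos
  by (metis add_pos_pos neg_eq_iff_add_eq_0 of_nat_add of_nat_eq_0_iff not_gr_zero)

lemma psi_nonzero: "psi \<noteq> (\<lambda>_. 0 :: 'k::field_char_0)"
proof
  assume "psi = (\<lambda>_. 0 :: 'k)"
  then have "(psi std_line :: 'k) = 0" by simp
  then show False using card_outer_orbit_pos unfolding psi_std_line by simp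
qed

lemma st_act_std_borel_psi: assumes "b \<in> std_borel" shows "st_act b psi = psi"
proof -
  have b: "b \<in> GL2" "pullback b std_line = std_line" using assms unfolding std_borel_def by auto
  have "pullback b L \<in> cong_class K std_line \<longleftrightarrow> L \<in> cong_class K std_line" if "is_ideal K" for K L
    using lines_cong_pullback_iff[OF that b(1), of std_line L] b(2) unfolding cong_class_def by simp
  then show ?thesis
    unfolding psi_def psi_int_def inner_orbit_def outer_orbit_def st_act_eq_pullback
    using ideal_I ideal_J by (simp add: fun_eq_iff)
qed

lemma std_borel_fixed_on_outer_orbit:
  assumes fixed: "\<forall>b\<in>std_borel. st_act b f = f" and L: "L \<in> outer_orbit"
  shows "f L = f line_t"
proof -
  obtain v where v: "unimodular v" "L = line_of v"
    using L cong_class_subset_tits2 unfolding outer_orbit_def tits2_eq by blast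
  have "v$2 \<in> J" "v$2 \<notin> I"
    using L lines_cong_std_line[OF ideal_J v(1)] lines_cong_std_line[OF ideal_I v(1)] v(2)
    unfolding outer_orbit_def cong_class_def by auto
  then have "v$2 dvd t" "t dvd v$2"
    using uniserial_dvd_of_covers[OF uniserial ideal_I ideal_J covers] t_in_J t_notin_I by blast+
  then show ?thesis unfolding v(2) line_t_def
    by (intro st_act_fixed_const_on_std_borel_orbit[OF uniserial fixed v(1) unimodular_vec2_1]) simp_all
qed

lemma std_borel_fixed_in_layer:
  fixes f :: "('r^2) set \<Rightarrow> 'k::field_char_0"
  assumes f: "f \<in> layer I J" and fixed: "\<forall>b\<in>std_borel. st_act b f = f"
  shows "f = (\<lambda>L. (f line_t / of_nat (card inner_orbit)) * psi L)"
proof -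
  have on_inner: "f L = f std_line" if "L \<in> inner_orbit" for L
    using f that unfolding layer_def inner_orbit_def cong_class_def by auto
  note on_outer = std_borel_fixed_on_outer_orbit[OF fixed]
  have "sum f (cong_class J std_line) = 0" using f std_line_tits2 unfolding layer_def by blast
  moreover have "sum f (cong_class J std_line) = sum f inner_orbit + sum f outer_orbit"
    unfolding orbits_partition by (rule sum.union_disjoint) (use orbits_partition finite_lines in auto)
  ultimately have "of_nat (card inner_orbit) * f std_line = - (of_nat (card outer_orbit) * f line_t)"
    using on_inner on_outer by (simp add: eq_neg_iff_add_eq_0)
  moreover have n: "(of_nat (card inner_orbit) :: 'k) \<noteq> 0"
    using card_inner_orbit_pos by (metis of_nat_eq_0_iff less_irrefl)
  moreover have "f std_line = (of_nat (card inner_orbit) * f std_line) / of_nat (card inner_orbit)"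
    using n by simp
  ultimately have "f std_line = - (of_nat (card outer_orbit) * f line_t) / of_nat (card inner_orbit)"
    by simp
  then show ?thesis
    using on_inner on_outer std_borel_fixed_layer_off_std_class[OF uniserial ideal_J f fixed]
      orbits_partition n
    by (auto simp: fun_eq_iff psi_def psi_int_def)
qed

lemma psi_in_invariant_subspace:
  fixes U :: "(('r^2) set \<Rightarrow> 'k::field_char_0) set"
  assumes U: "fsubspace U" "invariant GL2 st_act U" "U \<subseteq> layer I J" "U \<noteq> {\<lambda>_. 0}"
  shows "psi \<in> U"
proof -
  obtain u where u: "u \<in> U" "u \<noteq> (\<lambda>_. 0)" using U(4) fsubspace_zero[OF U(1)] by blast
  then obtain L where "u L \<noteq> 0" by (meson ext)
  moreover have "u \<in> steinberg2" using u(1) U(3) unfolding layer_def by blast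
  ultimately obtain g where g: "g \<in> GL2" "u (pullback g std_line) \<noteq> 0"
    using GL2_transitive unfolding steinberg2_iff by metis
  define h where "h = st_act g u"
  have "h \<in> U" using U(2) g(1) u(1) unfolding invariant_def h_def by blast
  define avg where "avg = (\<lambda>L. \<Sum>b\<in>std_borel. st_act b h L)"
  have avg_U: "avg \<in> U" unfolding avg_def
    by (rule fsubspace_sum[OF U(1) finite_matrices])
       (use U(2) \<open>h \<in> U\<close> std_borel_GL2 in \<open>auto simp: invariant_def\<close>)
  have "(std_borel :: ('r^2^2) set) \<noteq> {}" using one_in_std_borel by blast
  then have "avg std_line \<noteq> 0"
    using std_borel_average(2)[of h] g(2) finite_matrices[of std_borel]
    unfolding avg_def h_def st_act_eq_pullback by simp
  moreover have "avg = (\<lambda>L. (avg line_t / of_nat (card inner_orbit)) * psi L)"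
    using std_borel_fixed_in_layer avg_U U(3) std_borel_average(1) unfolding avg_def by blast
  ultimately obtain c where c: "c \<noteq> 0" "avg = (\<lambda>L. c * psi L)" by (metis mult_zero_left)
  then have "(\<lambda>L. (1 / c) * avg L) = psi" by (simp add: fun_eq_iff)
  then show ?thesis using fsubspace_scale[OF U(1) avg_U] by metis
qed

definition psi_correlation :: "'r^2^2 \<Rightarrow> int" where
  "psi_correlation g = (\<Sum>L\<in>tits2. psi_int L * psi_int (pullback g L))"

lemma pairing_psi_st_act: "pairing psi (st_act g psi) = (of_int (psi_correlation g) :: 'k::field)"
  unfolding pairing_def psi_correlation_def psi_def st_act_eq_pullback by simp

lemma psi_correlation_one_pos: "psi_correlation (mat 1) > 0"
proof -
  have "psi_int std_line * psi_int std_line \<le> (\<Sum>L\<in>tits2. psi_int L * psi_int L)"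
    by (rule member_le_sum) (simp_all add: std_line_tits2 finite_lines)
  moreover have "psi_int std_line * psi_int std_line > 0"
    unfolding psi_int_def using std_line_in_inner_orbit card_outer_orbit_pos by simp
  ultimately show ?thesis unfolding psi_correlation_def by simp
qed

lemma pairing_psi_psi_nonzero: "pairing psi psi \<noteq> (0::'k::field_char_0)"
  using pairing_psi_st_act[of "mat 1"] psi_correlation_one_pos
  unfolding st_act_one by (metis of_int_eq_0_iff less_irrefl)

definition psi_eigenvalue :: "'k::field_char_0" where
  "psi_eigenvalue = orbit_operator psi psi line_t / of_nat (card inner_orbit)"

lemma orbit_operator_psi: "orbit_operator psi psi = (\<lambda>L. (psi_eigenvalue :: 'k::field_char_0) * psi L)"
proof -
  have "orbit_operator psi psi \<in> (layer I J :: (_ \<Rightarrow> 'k) set)"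
    by (rule orbit_operator_in_subspace[OF fsubspace_layer invariant_layer[OF ideal_I ideal_J]
          psi_in_layer])
  moreover have "\<forall>b\<in>std_borel. st_act b (orbit_operator psi psi) = (orbit_operator psi psi :: _ \<Rightarrow> 'k)"
    using orbit_operator_st_act std_borel_GL2 st_act_std_borel_psi by metis
  ultimately show ?thesis unfolding psi_eigenvalue_def by (rule std_borel_fixed_in_layer)
qed

text \<open>Evaluating \<open>pairing (orbit_operator psi psi) psi\<close> gives a nonzero sum of squares.\<close>
lemma psi_eigenvalue_nonzero: "(psi_eigenvalue :: 'k::field_char_0) \<noteq> 0"
proof
  assume "(psi_eigenvalue :: 'k) = 0"
  then have "pairing (orbit_operator psi psi) psi = (0::'k)"
    unfolding orbit_operator_psi by (simp add: pairing_def)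
  moreover have "pairing (orbit_operator psi psi) psi
      = (of_int (\<Sum>g\<in>GL2. psi_correlation g * psi_correlation g) :: 'k)"
    unfolding pairing_orbit_operator of_int_sum of_int_mult
    by (simp add: pairing_commute[of _ psi] pairing_psi_st_act)
  moreover have "psi_correlation (mat 1) * psi_correlation (mat 1)
      \<le> (\<Sum>g\<in>GL2. psi_correlation g * psi_correlation g)"
    by (rule member_le_sum) (simp_all add: GL2_one finite_matrices)
  then have "(\<Sum>g\<in>GL2. psi_correlation g * psi_correlation g) \<noteq> 0"
    using psi_correlation_one_pos by (smt (verit) mult_pos_pos)
  ultimately show False by (metis of_int_eq_0_iff)
qed

theorem irreducible_layer: "irreducible_rep GL2 st_act (layer I J :: (_ \<Rightarrow> 'k::field_char_0) set)"
  by (rule irreducible_repI[OF fsubspace_layer invariant_layer[OF ideal_I ideal_J] psi_in_layer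
        psi_nonzero psi_in_invariant_subspace orbit_operator_psi psi_eigenvalue_nonzero
        pairing_psi_psi_nonzero])

end

section \<open>Decomposition of the Steinberg module into layers\<close>

definition class_average :: "'r::comm_ring_1 set \<Rightarrow> (('r^2) set \<Rightarrow> 'k::field) \<Rightarrow> (('r^2) set \<Rightarrow> 'k)" where
  "class_average I f L =
     (if L \<in> tits2 then sum f (cong_class I L) / of_nat (card (cong_class I L)) else 0)"

lemma class_average_const:
  "is_ideal I \<Longrightarrow> lines_cong I L L' \<Longrightarrow> class_average I f L = class_average I f L'"
  unfolding class_average_def using cong_class_eq[of I L L'] lines_cong_in_tits2[of I L L'] by simp

lemma class_average_sum:
  "class_average I (\<lambda>a. \<Sum>i\<in>S. d i a) L = (\<Sum>i\<in>S. class_average I (d i) L)"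
  unfolding class_average_def by (simp add: sum.swap[of _ "cong_class I L"] sum_divide_distrib)

lemma sum_class_average:
  fixes f :: "('r::{comm_ring_1,finite}^2) set \<Rightarrow> 'k::field_char_0"
  assumes I: "is_ideal I" and C: "C \<subseteq> tits2" and closed: "\<And>L L'. L \<in> C \<Longrightarrow> lines_cong I L L' \<Longrightarrow> L' \<in> C"
  shows "sum (class_average I f) C = sum f C"
proof -
  define n where "n L = (of_nat (card (cong_class I L)) :: 'k)" for L
  have n: "n L \<noteq> 0" if "L \<in> C" for L
    using card_cong_class_pos[OF I] that C unfolding n_def by (metis of_nat_eq_0_iff less_irrefl subsetD)
  have cls: "cong_class I L = {L'\<in>C. lines_cong I L L'}" if "L \<in> C" for L
    using that closed unfolding cong_class_def by blast
  have "class_average I f L = (\<Sum>L'\<in>C. if lines_cong I L L' then f L' / n L' else 0)"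
    if L: "L \<in> C" for L
  proof -
    have "class_average I f L = (\<Sum>L'\<in>cong_class I L. f L' / n L)"
      unfolding class_average_def n_def using L C by (auto simp: sum_divide_distrib)
    also have "\<dots> = (\<Sum>L'\<in>cong_class I L. f L' / n L')"
      unfolding n_def using cong_class_eq[OF I] by (simp add: cong_class_def)
    also have "\<dots> = (\<Sum>L'\<in>C. if lines_cong I L L' then f L' / n L' else 0)"
      unfolding cls[OF L] by (rule sum.inter_filter[OF finite_lines])
    finally show ?thesis .
  qed
  then have "sum (class_average I f) C = (\<Sum>L\<in>C. \<Sum>L'\<in>C. if lines_cong I L L' then f L' / n L' else 0)"
    by (rule sum.cong[OF refl])
  also have "\<dots> = (\<Sum>L'\<in>C. \<Sum>L\<in>C. if lines_cong I L L' then f L' / n L' else 0)"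
    by (rule sum.swap)
  also have "\<dots> = (\<Sum>L'\<in>C. n L' * (f L' / n L'))"
  proof (rule sum.cong[OF refl])
    fix L' assume L': "L' \<in> C"
    have "{L\<in>C. lines_cong I L L'} = cong_class I L'"
      unfolding cls[OF L'] using lines_cong_sym[OF I] by blast
    then show "(\<Sum>L\<in>C. if lines_cong I L L' then f L' / n L' else 0) = n L' * (f L' / n L')"
      unfolding n_def by (simp flip: sum.inter_filter[OF finite_lines])
  qed
  also have "\<dots> = sum f C" using n by simp
  finally show ?thesis .
qed

lemma class_average_UNIV:
  fixes f :: "('r::{comm_ring_1,finite}^2) set \<Rightarrow> 'k::field"
  assumes "f \<in> steinberg2" shows "class_average UNIV f = (\<lambda>_. 0)"
proof -
  have "cong_class UNIV L = tits2" if "L \<in> tits2" for L :: "('r^2) set"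
    unfolding cong_class_def using that lines_cong_UNIV lines_cong_in_tits2 by blast
  then show ?thesis using assms unfolding class_average_def steinberg2_iff by (auto simp: fun_eq_iff)
qed

lemma class_average_0:
  fixes f :: "('r::{comm_ring_1,finite}^2) set \<Rightarrow> 'k::field"
  assumes "f \<in> steinberg2" shows "class_average {0} f = f"
proof -
  have "cong_class {0} L = {L}" if "L \<in> tits2" for L :: "('r^2) set"
    unfolding cong_class_def using that lines_cong_0 lines_cong_refl[OF is_ideal_0] by blast
  then show ?thesis using assms unfolding class_average_def steinberg2_iff by (auto simp: fun_eq_iff)
qed

lemma class_average_layer_finer:
  fixes w :: "('r::{comm_ring_1,finite}^2) set \<Rightarrow> 'k::field_char_0"
  assumes w: "w \<in> layer I J" and I': "is_ideal I'" "I' \<subseteq> I"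
  shows "class_average I' w = w"
proof
  fix L
  show "class_average I' w L = w L"
  proof (cases "L \<in> tits2")
    case True
    have "w L' = w L" if "L' \<in> cong_class I' L" for L'
      using w lines_cong_mono[OF I'(2)] that unfolding layer_def cong_class_def
      by (metis (mono_tags, lifting) mem_Collect_eq)
    then have "sum w (cong_class I' L) = (\<Sum>L'\<in>cong_class I' L. w L)" by (rule sum.cong[OF refl])
    then show ?thesis
      unfolding class_average_def using True cong_class_nonempty[OF I'(1) True] by simp
  qed (use w in \<open>simp add: class_average_def layer_def steinberg2_iff\<close>)
qed

lemma class_average_layer_coarser:
  fixes w :: "('r::{comm_ring_1,finite}^2) set \<Rightarrow> 'k::field_char_0"
  assumes w: "w \<in> layer I J" and J: "is_ideal J" and J': "is_ideal J'" "J \<subseteq> J'"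
  shows "class_average J' w = (\<lambda>_. 0)"
proof
  fix L
  have "class_average J w = (\<lambda>_. 0)"
    using w unfolding class_average_def layer_def by auto
  moreover have "sum w (cong_class J' L) = sum (class_average J w) (cong_class J' L)"
    by (rule sum_class_average[symmetric, OF J cong_class_subset_tits2])
       (use lines_cong_mono[OF J'(2)] lines_cong_trans[OF J'(1)] in \<open>auto simp: cong_class_def\<close>)
  ultimately have "sum w (cong_class J' L) = 0" by simp
  then show "class_average J' w L = 0" unfolding class_average_def by simp
qed

lemma class_average_diff_in_layer:
  fixes f :: "('r::{comm_ring_1,finite}^2) set \<Rightarrow> 'k::field_char_0"
  assumes f: "f \<in> steinberg2" and I: "is_ideal I" and J: "is_ideal J" and IJ: "I \<subseteq> J"
  shows "(\<lambda>L. class_average I f L - class_average J f L) \<in> layer I J"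
proof -
  have sum_tits2: "sum (class_average K f) tits2 = sum f tits2" if "is_ideal K" for K
    by (rule sum_class_average[OF that subset_refl]) (use lines_cong_in_tits2 in blast)
  have sum_class: "sum (class_average K f) (cong_class J L) = sum f (cong_class J L)"
    if "is_ideal K" "K \<subseteq> J" for K L
    by (rule sum_class_average[OF that(1) cong_class_subset_tits2])
       (use lines_cong_mono[OF that(2)] lines_cong_trans[OF J] in \<open>auto simp: cong_class_def\<close>)
  have "(\<lambda>L. class_average I f L - class_average J f L) \<in> steinberg2"
    using sum_tits2[OF I] sum_tits2[OF J]
    unfolding steinberg2_iff by (simp add: sum_subtractf class_average_def)
  moreover have "\<forall>L L'. lines_cong I L L' \<longrightarrow>
      class_average I f L - class_average J f L = class_average I f L' - class_average J f L'"
    using class_average_const[OF I] class_average_const[OF J] lines_cong_mono[OF IJ] by metis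
  moreover have "\<forall>L\<in>tits2. (\<Sum>L'\<in>cong_class J L. class_average I f L' - class_average J f L') = 0"
    using sum_class[OF I IJ] sum_class[OF J subset_refl] by (simp add: sum_subtractf)
  ultimately show ?thesis unfolding layer_def by simp
qed

lemma composition_series_ideal: "composition_series k c \<Longrightarrow> i \<le> k \<Longrightarrow> is_ideal (c i)"
  unfolding composition_series_def ideal_chain_def by simp

lemma composition_series_mono: "composition_series k c \<Longrightarrow> i \<le> j \<Longrightarrow> j \<le> k \<Longrightarrow> c i \<subseteq> c j"
  unfolding composition_series_def by (elim conjE) (rule ideal_chain_mono)

lemma composition_series_strict: "composition_series k c \<Longrightarrow> i < k \<Longrightarrow> c i \<subset> c (Suc i)"
  unfolding composition_series_def ideal_chain_def by simp

lemma composition_series_covers: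
  "composition_series k c \<Longrightarrow> i < k \<Longrightarrow>
     \<forall>K. is_ideal K \<and> c i \<subseteq> K \<and> K \<subseteq> c (Suc i) \<longrightarrow> K = c i \<or> K = c (Suc i)"
  unfolding composition_series_def by simp

lemma composition_series_layer_step:
  assumes "uniserial TYPE('r::{comm_ring_1,finite})" and c: "composition_series k (c :: nat \<Rightarrow> 'r set)"
    and "i < k"
  shows "\<exists>t. layer_step (c i) (c (Suc i)) t"
proof -
  have "c i \<subset> c (Suc i)" using composition_series_strict[OF c \<open>i < k\<close>] .
  then obtain t where "t \<in> c (Suc i)" "t \<notin> c i" by blast
  moreover have "\<forall>K. is_ideal K \<and> c i \<subseteq> K \<and> K \<subseteq> c (Suc i) \<longrightarrow> K = c i \<or> K = c (Suc i)"
    using composition_series_covers[OF c \<open>i < k\<close>] .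
  ultimately have "layer_step (c i) (c (Suc i)) t"
    using assms(1,3) composition_series_ideal[OF c] \<open>c i \<subset> c (Suc i)\<close>
    by (intro layer_step.intro) auto
  then show ?thesis ..
qed

lemma class_average_layer_component:
  fixes d :: "('r::{comm_ring_1,finite}^2) set \<Rightarrow> 'k::field_char_0"
  assumes c: "composition_series k c" and "i < k" "j < k" and d: "d \<in> layer (c j) (c (Suc j))"
  shows "class_average (c i) d L - class_average (c (Suc i)) d L = (if j = i then d L else 0)"
proof -
  have ideal: "is_ideal (c m)" if "m \<le> k" for m using composition_series_ideal[OF c that] .
  have finer: "class_average (c m) d = d" if "m \<le> j" for m
    using class_average_layer_finer[OF d] ideal composition_series_mono[OF c] that \<open>j < k\<close> by simp
  have coarser: "class_average (c m) d = (\<lambda>_. 0)" if "Suc j \<le> m" "m \<le> k" for m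
    using class_average_layer_coarser[OF d] ideal composition_series_mono[OF c] that \<open>j < k\<close> by simp
  consider "j = i" | "i < j" | "j < i" by linarith
  then show ?thesis
    by cases (use finer coarser \<open>i < k\<close> in auto)
qed

lemma layer_decomposition_unique:
  fixes f :: "('r::{comm_ring_1,finite}^2) set \<Rightarrow> 'k::field_char_0"
  assumes c: "composition_series k c" and ws: "\<forall>j<k. ws j \<in> layer (c j) (c (Suc j))"
    and f: "f = (\<lambda>a. \<Sum>j<k. ws j a)" and i: "i < k"
  shows "ws i = (\<lambda>L. class_average (c i) f L - class_average (c (Suc i)) f L)"
proof
  fix L
  have "class_average (c i) f L - class_average (c (Suc i)) f L
      = (\<Sum>j<k. class_average (c i) (ws j) L - class_average (c (Suc i)) (ws j) L)"
    unfolding f class_average_sum sum_subtractf ..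
  also have "\<dots> = (\<Sum>j<k. if j = i then ws i L else 0)"
  proof (rule sum.cong[OF refl])
    fix j assume "j \<in> {..<k}"
    then show "class_average (c i) (ws j) L - class_average (c (Suc i)) (ws j) L
        = (if j = i then ws i L else 0)"
      using class_average_layer_component[OF c i, of j "ws j" L] ws by auto
  qed
  also have "\<dots> = ws i L" using i by simp
  finally show "ws i L = class_average (c i) f L - class_average (c (Suc i)) f L" by simp
qed

theorem direct_sum_layers:
  assumes c: "composition_series k c"
  shows "direct_sum (steinberg2 :: (('r::{comm_ring_1,finite}^2) set \<Rightarrow> 'k::field_char_0) set) k
           (\<lambda>i. layer (c i) (c (Suc i)))"
  unfolding direct_sum_def
proof (intro conjI allI impI ballI)
  fix i assume "i < k"
  then show "layer (c i) (c (Suc i)) \<subseteq> (steinberg2 :: (_ \<Rightarrow> 'k) set)" unfolding layer_def by blast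
next
  fix f :: "('r^2) set \<Rightarrow> 'k" assume f: "f \<in> steinberg2"
  define ws where "ws i = (if i < k then (\<lambda>L. class_average (c i) f L - class_average (c (Suc i)) f L)
      else (\<lambda>_. 0))" for i
  have "\<forall>i. (i < k \<longrightarrow> ws i \<in> layer (c i) (c (Suc i))) \<and> (k \<le> i \<longrightarrow> ws i = (\<lambda>_. 0))"
    unfolding ws_def using class_average_diff_in_layer[OF f] composition_series_ideal[OF c]
      composition_series_mono[OF c] by auto
  moreover have "f = (\<lambda>L. \<Sum>i<k. ws i L)"
  proof
    fix L
    have "(\<Sum>i<k. ws i L) = (\<Sum>i<k. class_average (c i) f L - class_average (c (Suc i)) f L)"
      unfolding ws_def by simp
    also have "\<dots> = class_average (c 0) f L - class_average (c k) f L"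
      by (rule sum_lessThan_telescope')
    also have "\<dots> = f L"
      using c class_average_0[OF f] class_average_UNIV[OF f] unfolding composition_series_def by simp
    finally show "f L = (\<Sum>i<k. ws i L)" by simp
  qed
  moreover have "ws' = ws"
    if "\<forall>i. (i < k \<longrightarrow> ws' i \<in> layer (c i) (c (Suc i))) \<and> (k \<le> i \<longrightarrow> ws' i = (\<lambda>_. 0))"
      and "f = (\<lambda>a. \<Sum>i<k. ws' i a)" for ws'
    using layer_decomposition_unique[OF c _ that(2)] that(1) unfolding ws_def by (auto simp: fun_eq_iff)
  ultimately show "\<exists>!ws. (\<forall>i. (i < k \<longrightarrow> ws i \<in> layer (c i) (c (Suc i))) \<and> (k \<le> i \<longrightarrow> ws i = (\<lambda>_. 0)))
      \<and> f = (\<lambda>a. \<Sum>i<k. ws i a)"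
    by (intro ex1I[of _ ws]) blast+
qed

section \<open>Distinguishing the layers\<close>

definition lower_transvection :: "'r::comm_ring_1 \<Rightarrow> 'r^2^2" where
  "lower_transvection t = mat2 1 0 t 1"

lemma lower_transvection_GL2: "lower_transvection t \<in> GL2"
  unfolding lower_transvection_def by (rule in_GL2I[of _ "mat2 1 0 (-t) 1"]) (simp_all add: mat2_one)

lemma pullback_lower_transvection:
  "pullback (lower_transvection t) (line_of v) = line_of (vec2 (v$1) (v$2 - t * v$1))"
  by (rule pullback_line_of[OF lower_transvection_GL2])
     (simp add: lower_transvection_def vec_eq_iff forall_2)

text \<open>The transvection moves every line only within its class modulo any ideal containing \<open>t\<close>.\<close>
lemma st_act_lower_transvection_layer:
  assumes K: "is_ideal K" and t: "t \<in> K" and f: "f \<in> layer K J"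
  shows "st_act (lower_transvection t) f = f"
proof
  fix L
  show "st_act (lower_transvection t) f L = f L"
  proof (cases "L \<in> tits2")
    case True
    then obtain v where v: "unimodular v" "L = line_of v" unfolding tits2_eq by blast
    define w where "w = vec2 (v$1) (v$2 - t * v$1)"
    have "lower_transvection t *v w = v"
      unfolding w_def lower_transvection_def by (simp add: vec_eq_iff forall_2)
    then have w: "unimodular w" using unimodular_of_matrix_vector_mult v(1) by metis
    have "det2 v w = - (t * (v$1 * v$1))" unfolding w_def det2_def by (simp add: algebra_simps)
    then have "det2 v w \<in> K" using is_ideal_uminus_iff[OF K] is_ideal_mult_right[OF K t] by simp
    then have "lines_cong K L (pullback (lower_transvection t) L)"
      unfolding v(2) pullback_lower_transvection w_def[symmetric]
      using lines_cong_iff[OF K v(1) w] by simp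
    then show ?thesis using f unfolding layer_def st_act_eq_pullback by auto
  next
    case False
    then have "pullback (lower_transvection t) L \<notin> tits2"
      using pullback_tits2_iff[OF lower_transvection_GL2] by blast
    then show ?thesis using False f unfolding layer_def steinberg2_iff st_act_eq_pullback by auto
  qed
qed

lemma not_iso_rep_moved_fixed:
  assumes g: "g \<in> G" and \<psi>: "\<psi> \<in> A" "act g \<psi> \<in> A" "act g \<psi> \<noteq> \<psi>"
    and fixes_B: "\<forall>w\<in>B. act g w = w"
  shows "\<not> iso_rep G act A B"
proof
  assume "iso_rep G act A B"
  then obtain \<phi> where \<phi>: "bij_betw \<phi> A B" "\<forall>g\<in>G. \<forall>w\<in>A. \<phi> (act g w) = act g (\<phi> w)"
    unfolding iso_rep_def by blast
  have "\<phi> (act g \<psi>) = \<phi> \<psi>" using \<phi> g \<psi>(1) fixes_B bij_betwE by metis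
  then show False using \<phi>(1) \<psi> unfolding bij_betw_def inj_on_def by blast
qed

lemma not_iso_rep_fixed_moved:
  assumes g: "g \<in> G" and \<psi>: "\<psi> \<in> A" "act g \<psi> \<noteq> \<psi>"
    and fixes_B: "\<forall>w\<in>B. act g w = w"
  shows "\<not> iso_rep G act B A"
proof
  assume "iso_rep G act B A"
  then obtain \<phi> where \<phi>: "bij_betw \<phi> B A" "\<forall>g\<in>G. \<forall>w\<in>B. \<phi> (act g w) = act g (\<phi> w)"
    unfolding iso_rep_def by blast
  obtain w where "w \<in> B" "\<psi> = \<phi> w" using \<phi>(1) \<psi>(1) unfolding bij_betw_def by blast
  then show False using \<phi>(2) g fixes_B \<psi>(2) by metis
qed

lemma not_iso_trivial_moved:
  fixes A :: "('a \<Rightarrow> 'k::field) set"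
  assumes g: "g \<in> G" and \<psi>: "\<psi> \<in> A" "act g \<psi> \<in> A" "act g \<psi> \<noteq> \<psi>"
  shows "\<not> iso_trivial G act A"
proof
  assume "iso_trivial G act A"
  then obtain \<phi> :: "('a \<Rightarrow> 'k) \<Rightarrow> 'k" where \<phi>: "bij_betw \<phi> A UNIV" "\<forall>g\<in>G. \<forall>w\<in>A. \<phi> (act g w) = \<phi> w"
    unfolding iso_trivial_def by blast
  then have "\<phi> (act g \<psi>) = \<phi> \<psi>" using g \<psi>(1) by blast
  then show False using \<phi>(1) \<psi> unfolding bij_betw_def inj_on_def by blast
qed

context layer_step
begin

lemma st_act_lower_transvection_psi:
  "st_act (lower_transvection t) psi \<noteq> (psi :: _ \<Rightarrow> 'k::field_char_0)"
proof
  assume eq: "st_act (lower_transvection t) psi = (psi :: _ \<Rightarrow> 'k)"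
  have u: "unimodular (vec2 1 (-t))" by (rule unimodular_vec2_1)
  have "pullback (lower_transvection t) std_line = line_of (vec2 1 (-t))"
    unfolding std_line_def pullback_lower_transvection by simp
  moreover have "line_of (vec2 1 (-t)) \<in> outer_orbit"
    using lines_cong_std_line[OF ideal_J u] lines_cong_std_line[OF ideal_I u] t_in_J t_notin_I
      is_ideal_uminus_iff[OF ideal_I] is_ideal_uminus_iff[OF ideal_J]
    unfolding outer_orbit_def cong_class_def by simp
  ultimately have "psi std_line = (psi line_t :: 'k)"
    using fun_cong[OF eq, of std_line] unfolding st_act_eq_pullback
    by (metis psi_outer_orbit line_t_in_outer_orbit)
  then show False using psi_std_line_neq_line_t[where 'k='k] by simp
qed

lemma psi_moved_in_layer:
  "st_act (lower_transvection t) psi \<in> (layer I J :: (_ \<Rightarrow> 'k::field_char_0) set)"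
  by (rule st_act_layer[OF ideal_I ideal_J lower_transvection_GL2 psi_in_layer])

lemma not_iso_trivial_layer: "\<not> iso_trivial GL2 st_act (layer I J :: (_ \<Rightarrow> 'k::field_char_0) set)"
  by (rule not_iso_trivial_moved[where act=st_act, OF lower_transvection_GL2 psi_in_layer
        psi_moved_in_layer st_act_lower_transvection_psi])

end

lemma layers_not_iso:
  assumes U: "uniserial TYPE('r::{comm_ring_1,finite})" and c: "composition_series k (c :: nat \<Rightarrow> 'r set)"
    and "i < j" "j < k"
  shows "\<not> iso_rep GL2 st_act (layer (c i) (c (Suc i)) :: (_ \<Rightarrow> 'k::field_char_0) set)
           (layer (c j) (c (Suc j)))"
    and "\<not> iso_rep GL2 st_act (layer (c j) (c (Suc j)) :: (_ \<Rightarrow> 'k::field_char_0) set)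
           (layer (c i) (c (Suc i)))"
proof -
  obtain t where step: "layer_step (c i) (c (Suc i)) t"
    using composition_series_layer_step[OF U c] assms(3,4) by fastforce
  have "t \<in> c j"
    using layer_step.t_in_J[OF step] composition_series_mono[OF c, of "Suc i" j] assms(3,4) by auto
  have fixes_layer_j: "\<forall>w\<in>layer (c j) (c (Suc j)). st_act (lower_transvection t) w = (w :: _ \<Rightarrow> 'k)"
  proof
    fix w :: "_ \<Rightarrow> 'k" assume "w \<in> layer (c j) (c (Suc j))"
    then show "st_act (lower_transvection t) w = w"
      using st_act_lower_transvection_layer composition_series_ideal[OF c] \<open>t \<in> c j\<close> assms(4)
      by (metis less_imp_le_nat)
  qed
  show "\<not> iso_rep GL2 st_act (layer (c i) (c (Suc i)) :: (_ \<Rightarrow> 'k) set) (layer (c j) (c (Suc j)))"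
    by (rule not_iso_rep_moved_fixed[where act=st_act, OF lower_transvection_GL2
          layer_step.psi_in_layer[OF step]
          layer_step.psi_moved_in_layer[OF step] layer_step.st_act_lower_transvection_psi[OF step]
          fixes_layer_j])
  show "\<not> iso_rep GL2 st_act (layer (c j) (c (Suc j)) :: (_ \<Rightarrow> 'k) set) (layer (c i) (c (Suc i)))"
    by (rule not_iso_rep_fixed_moved[where act=st_act, OF lower_transvection_GL2
          layer_step.psi_in_layer[OF step]
          layer_step.st_act_lower_transvection_psi[OF step] fixes_layer_j])
qed

theorem mainTheorem6:
  fixes R :: "'r::{comm_ring_1,finite} itself"
    and K :: "'k::field_char_0 itself"
  assumes "local_ring R" and "uniserial R"
  shows "\<exists>W :: nat \<Rightarrow> (('r ^2) set \<Rightarrow> 'k) set.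
           direct_sum (steinberg2 :: (('r ^2) set \<Rightarrow> 'k) set) (ring_length R) W
         \<and> (\<forall>i < ring_length R. irreducible_rep (GL2 :: ('r ^2^2) set) st_act (W i))
         \<and> (\<forall>i < ring_length R. \<forall>j < ring_length R. i \<noteq> j \<longrightarrow>
              \<not> iso_rep (GL2 :: ('r ^2^2) set) st_act (W i) (W j))
         \<and> (\<forall>i < ring_length R. \<not> iso_trivial (GL2 :: ('r ^2^2) set) st_act (W i))"
proof -
  have U: "uniserial TYPE('r)" using assms(2) unfolding uniserial_def .
  have k: "ring_length R = ring_length TYPE('r)" unfolding ring_length_def ..
  obtain c :: "nat \<Rightarrow> 'r set" where c: "composition_series (ring_length R) c"
    using composition_series_exists unfolding k by blast
  have step: "\<exists>t. layer_step (c i) (c (Suc i)) t" if "i < ring_length R" for i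
    using composition_series_layer_step[OF U c that] .
  show ?thesis
  proof (intro exI[of _ "\<lambda>i. layer (c i) (c (Suc i))"] conjI allI impI)
    show "direct_sum steinberg2 (ring_length R) (\<lambda>i. layer (c i) (c (Suc i)) :: (_ \<Rightarrow> 'k) set)"
      by (rule direct_sum_layers[OF c])
  next
    fix i assume "i < ring_length R"
    then show "irreducible_rep GL2 st_act (layer (c i) (c (Suc i)) :: (_ \<Rightarrow> 'k) set)"
      and "\<not> iso_trivial GL2 st_act (layer (c i) (c (Suc i)) :: (_ \<Rightarrow> 'k) set)"
      using step layer_step.irreducible_layer layer_step.not_iso_trivial_layer by blast+
  next
    fix i j assume ij: "i < ring_length R" "j < ring_length R" "i \<noteq> j"
    then consider "i < j" | "j < i" by linarith
    then show "\<not> iso_rep GL2 st_act (layer (c i) (c (Suc i)) :: (_ \<Rightarrow> 'k) set) (layer (c j) (c (Suc j)))"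
      by cases (use layers_not_iso[OF U c] ij in blast)+
  qed
qed

end
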